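(* Assume $F(x,v,u)=F_0(x,v)+F_1(x,v)u$ with $F_0:\mathbb{R}^n\times\mathbb{R}^n\to\mathbb{R}^n$ and $F_1:\mathbb{R}^n\times\mathbb{R}^n\to\mathbb{R}^{n\times m}$ globally Lipschitz continuous and continuously differentiable, and $\phi\in C([-\tau,0];\mathbb{R}^n)$. Let $(u_k)_{k\in\mathbb{N}}$ be bounded in $L^\infty(I;\mathbb{R}^m)$ with $u_k\rightharpoonup u$ in $L^1(I;\mathbb{R}^m)$. For each $k$ let $x_k$ be the solution of $x_k'(t)=F(x_k(t),\mathrm{LIE}_k(x_{k,t}),u_k(t))$ for a.e. $t\in I$ with $x_k=\phi$ on $[-\tau,0]$, and let $x$ be the solution of $x'(t)=F(x(t),\max x_t,u(t))$ for a.e. $t\in(0,T)$ with $x=\phi$ on $[-\tau,0]$. Then $x_k\rightharpoonup x$ in $W^{1,1}(I;\mathbb{R}^n)$.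
   Context: $n,m\ge1$, $T>0$, $\tau>0$, $I=[0,T]$, $I_\tau=[-\tau,T]$. For $x\in C(I_\tau;\mathbb{R}^n)$ and $t\in I$: $x_t(s)=x(t-s)$ for $s\in[0,\tau]$, $x_{k,t}:=(x_k)_t$, $\max x_t:=\max_{s\in[t-\tau,t]}x(s)$ and $\mathrm{LIE}_k(x_t):=\frac1k\log\big(\int_{t-\tau}^t\exp(k\,x(s))\,\mathrm{d}s\big)$, both componentwise. Solutions are understood in $C(I_\tau;\mathbb{R}^n)\cap W^{1,\infty}(I;\mathbb{R}^n)$. *)

theory Defs
  imports "HOL-Analysis.Analysis"
begin

definition maxhist :: "real \<Rightarrow> (real \<Rightarrow> real^'n) \<Rightarrow> real \<Rightarrow> real^'n" where
  "maxhist \<tau> x t = (\<chi> i. Sup ((\<lambda>s. x s $ i) ` {t - \<tau>..t}))"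

definition LIE :: "real \<Rightarrow> real \<Rightarrow> (real \<Rightarrow> real^'n) \<Rightarrow> real \<Rightarrow> real^'n" where
  "LIE k \<tau> x t = (\<chi> i. (1 / k) * ln (integral {t - \<tau>..t} (\<lambda>s. exp (k * (x s $ i)))))"

definition lip_C1 :: "('a::euclidean_space \<Rightarrow> 'b::euclidean_space) \<Rightarrow> bool" where
  "lip_C1 G \<longleftrightarrow> (\<exists>L. L-lipschitz_on UNIV G) \<and>
     (\<exists>G'. (\<forall>p. (G has_derivative blinfun_apply (G' p)) (at p)) \<and> continuous_on UNIV G')"

definition Linf :: "real set \<Rightarrow> (real \<Rightarrow> 'a::euclidean_space) \<Rightarrow> bool" where
  "Linf S g \<longleftrightarrow> g \<in> borel_measurable (lebesgue_on S) \<and> (\<exists>B. AE t in lebesgue_on S. norm (g t) \<le> B)"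

text \<open>Weak convergence in L^1(S): testing against all of L-infinity(S) (the dual of L^1).\<close>
definition weak_L1 :: "real set \<Rightarrow> (nat \<Rightarrow> real \<Rightarrow> 'a::euclidean_space) \<Rightarrow> (real \<Rightarrow> 'a) \<Rightarrow> bool" where
  "weak_L1 S f h \<longleftrightarrow> (\<forall>k. integrable (lebesgue_on S) (f k)) \<and> integrable (lebesgue_on S) h \<and>
     (\<forall>g. Linf S g \<longrightarrow>
        (\<lambda>k. integral\<^sup>L (lebesgue_on S) (\<lambda>t. f k t \<bullet> g t))
          \<longlonglongrightarrow> integral\<^sup>L (lebesgue_on S) (\<lambda>t. h t \<bullet> g t))"

text \<open>Weak convergence in W^{1,1}(S): every functional of the dual, i.e.
  w \<mapsto> int (w . g0 + w' . g1) with g0, g1 in L-infinity, converges.\<close>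
definition weak_W11 :: "real set \<Rightarrow> (nat \<Rightarrow> real \<Rightarrow> 'a::euclidean_space) \<Rightarrow> (real \<Rightarrow> 'a) \<Rightarrow> bool" where
  "weak_W11 S f h \<longleftrightarrow>
     (\<forall>g0 g1. Linf S g0 \<longrightarrow> Linf S g1 \<longrightarrow>
        (\<lambda>k. integral\<^sup>L (lebesgue_on S)
               (\<lambda>t. f k t \<bullet> g0 t + vector_derivative (f k) (at t) \<bullet> g1 t))
          \<longlonglongrightarrow> integral\<^sup>L (lebesgue_on S)
               (\<lambda>t. h t \<bullet> g0 t + vector_derivative h (at t) \<bullet> g1 t))"

text \<open>x is a solution in C([-tau,T]) \<inter> W^{1,inf}([0,T]) of x'(t) = rhs t for a.e. t in [0,T],
  with x = phi on [-tau,0].  (W^{1,inf} on an interval = Lipschitz.)\<close>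
definition is_solution :: "real \<Rightarrow> real \<Rightarrow> (real \<Rightarrow> real^'n) \<Rightarrow> (real \<Rightarrow> real^'n) \<Rightarrow> (real \<Rightarrow> real^'n) \<Rightarrow> bool" where
  "is_solution \<tau> T \<phi> rhs x \<longleftrightarrow>
     continuous_on {-\<tau>..T} x \<and> (\<exists>L. L-lipschitz_on {0..T} x) \<and>
     (\<forall>t\<in>{-\<tau>..0}. x t = \<phi> t) \<and>
     (AE t in lebesgue_on {0..T}. (x has_vector_derivative rhs t) (at t))"

end

(* Weak W^{1,1} convergence splits into weak L^1 convergence of the x_k and of their
   derivatives.  The log-integral-exp term grows at most linearly, so a Gronwall argument makes
   the x_k uniformly bounded and equi-Lipschitz.  Equicontinuity then makes
   LIE_k(x_{k,t}) - max x_{k,t} tend to 0 uniformly: LIE_k lies between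
   max - (oscillation on a window of length eta) + (ln eta)/k and max + (ln tau)/k.
   With G = F_1(x, max x_t), which is continuous, write x_k' - x' = G (u_k - u) + A_k.  The
   primitives of G (u_k - u) tend to 0 pointwise by weak convergence, hence uniformly since they
   are equi-Lipschitz; a second Gronwall argument gives x_k -> x uniformly, so A_k -> 0
   uniformly, and x_k' -> x' weakly in L^1 because G u_k -> G u weakly. *)

theory Submission
  imports Defs
begin

lemma AE_lebesgue_on_negligible_exception:
  assumes "AE t in lebesgue_on S. P t" and "S \<in> sets lebesgue"
  obtains N where "negligible N" and "\<And>t. t \<in> S \<Longrightarrow> t \<notin> N \<Longrightarrow> P t"
proof -
  from assms(1) obtain N where N: "{t \<in> S. \<not> P t} \<subseteq> N" "N \<in> null_sets (lebesgue_on S)"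
    unfolding eventually_ae_filter by auto
  then have "negligible N"
    using null_sets_restrict_space[OF assms(2)] by (auto simp: negligible_iff_null_sets)
  with N(1) show thesis using that by blast
qed

lemma AE_lebesgue_on_subset:
  assumes "AE t in lebesgue_on S. P t" and "S' \<subseteq> S" "S \<in> sets lebesgue" "S' \<in> sets lebesgue"
  shows "AE t in lebesgue_on S'. P t"
  using assms by (auto simp: AE_restrict_space_iff elim!: eventually_mono)

lemma has_integral_bound_AE:
  fixes f :: "real \<Rightarrow> 'a::euclidean_space"
  assumes "(f has_integral i) {a..b}" and "a \<le> b" "0 \<le> B"
    and "AE t in lebesgue_on {a..b}. norm (f t) \<le> B"
  shows "norm i \<le> B * (b - a)"
proof -
  obtain N where N: "negligible N" "\<And>t. t \<in> {a..b} \<Longrightarrow> t \<notin> N \<Longrightarrow> norm (f t) \<le> B"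
    using AE_lebesgue_on_negligible_exception[OF assms(4)] by auto
  have "((\<lambda>t. if t \<in> N then 0 else f t) has_integral i) {a..b}"
    by (rule has_integral_spike[OF N(1) _ assms(1)]) auto
  then have "norm i \<le> B * Henstock_Kurzweil_Integration.content (cbox a b)"
    by (intro has_integral_bound[OF assms(3)]) (use N(2) assms(3) in auto)
  then show ?thesis using assms(2) by simp
qed

lemma norm_integral_lebesgue_on_le:
  fixes f :: "real \<Rightarrow> 'a::euclidean_space"
  assumes "integrable (lebesgue_on {a..b}) f" and "a \<le> b" "0 \<le> B"
    and "AE t in lebesgue_on {a..b}. norm (f t) \<le> B"
  shows "norm (integral\<^sup>L (lebesgue_on {a..b}) f) \<le> B * (b - a)"
proof -
  have "(f has_integral integral\<^sup>L (lebesgue_on {a..b}) f) {a..b}"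
    using assms(1) by (simp add: has_integral_integral_lebesgue_on)
  then show ?thesis using has_integral_bound_AE assms(2-4) by blast
qed

lemma has_integral_integral_diff:
  fixes f :: "real \<Rightarrow> 'a::banach"
  assumes f: "f integrable_on {a..b}" and st: "a \<le> s" "s \<le> t" "t \<le> b"
  shows "(f has_integral (integral {a..t} f - integral {a..s} f)) {s..t}"
proof -
  have "f integrable_on {a..t}" "f integrable_on {s..t}"
    using st by (auto intro: integrable_on_subinterval[OF f])
  then have "integral {a..s} f + integral {s..t} f = integral {a..t} f"
    using st by (intro Henstock_Kurzweil_Integration.integral_combine) auto
  then show ?thesis
    using \<open>f integrable_on {s..t}\<close> by (metis add_diff_cancel_left' integrable_integral)
qed

section \<open>Lipschitz functions and solutions\<close>

lemma difference_quotient_LIMSEQ: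
  fixes z :: "real \<Rightarrow> 'a::real_normed_vector"
  assumes "(z has_vector_derivative r) (at t)"
  shows "(\<lambda>n. (z (t + 1 / real (Suc n)) - z t) /\<^sub>R (1 / real (Suc n))) \<longlonglongrightarrow> r"
proof -
  let ?h = "\<lambda>n. 1 / real (Suc n)"
  let ?F = "\<lambda>y. norm (z y - z t - (y - t) *\<^sub>R r) / norm (y - t)"
  have F: "(?F \<longlongrightarrow> 0) (at t)"
    using assms unfolding has_vector_derivative_def has_derivative_iff_norm by auto
  have h0: "?h \<longlonglongrightarrow> 0"
    using LIMSEQ_inverse_real_of_nat by (simp add: inverse_eq_divide)
  have "filterlim (\<lambda>n. t + ?h n) (at t) sequentially"
  proof (rule tendsto_imp_filterlim_at_right[THEN filterlim_mono])
    show "((\<lambda>n. t + ?h n) \<longlongrightarrow> t) sequentially"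
      using tendsto_add[OF tendsto_const h0, of t] by simp
  qed (auto intro: at_le)
  then have "(\<lambda>n. ?F (t + ?h n)) \<longlonglongrightarrow> 0"
    by (rule filterlim_compose[OF F])
  moreover have "?F (t + ?h n) = norm ((z (t + ?h n) - z t) /\<^sub>R ?h n - r)" for n
  proof -
    have "(z (t + ?h n) - z t) /\<^sub>R ?h n - r = real (Suc n) *\<^sub>R (z (t + ?h n) - z t - ?h n *\<^sub>R r)"
      by (simp add: algebra_simps)
    then show ?thesis by simp
  qed
  ultimately have "(\<lambda>n. norm ((z (t + ?h n) - z t) /\<^sub>R ?h n - r)) \<longlonglongrightarrow> 0"
    by simp
  then show ?thesis
    using Lim_null tendsto_norm_zero_iff by blast
qed

lemma lipschitz_on_vector_derivative_le:
  fixes z :: "real \<Rightarrow> 'a::real_normed_vector"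
  assumes L: "L-lipschitz_on {a..b} z" and t: "t \<in> {a<..<b}"
    and "(z has_vector_derivative r) (at t)"
  shows "norm r \<le> L"
proof -
  let ?h = "\<lambda>n. 1 / real (Suc n)"
  obtain M where M: "?h M < b - t"
    using reals_Archimedean[of "b - t"] t by (auto simp: inverse_eq_divide)
  have "norm ((z (t + ?h n) - z t) /\<^sub>R ?h n) \<le> L" if "n \<ge> M" for n
  proof -
    have "?h n \<le> ?h M" "0 < ?h n" "a < t" "t < b" using that t by (simp_all add: frac_le)
    then have "t + ?h n \<in> {a..b}" using M unfolding atLeastAtMost_iff by linarith
    then have "norm (z (t + ?h n) - z t) \<le> L * ?h n"
      using lipschitz_onD[OF L, of "t + ?h n" t] t by (simp add: dist_norm)
    then have "real (Suc n) * norm (z (t + ?h n) - z t) \<le> L"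
      by (simp add: pos_le_divide_eq mult.commute del: of_nat_Suc)
    then show ?thesis by (simp del: of_nat_Suc)
  qed
  then have "eventually (\<lambda>n. norm ((z (t + ?h n) - z t) /\<^sub>R ?h n) \<le> L) sequentially"
    unfolding eventually_sequentially by blast
  then show ?thesis
    using tendsto_upperbound[OF tendsto_norm[OF difference_quotient_LIMSEQ[OF assms(3)]]] by auto
qed

lemma norm_integral_minus_left_value_le:
  fixes z :: "real \<Rightarrow> 'a::euclidean_space"
  assumes L: "L-lipschitz_on {c..c + h} z" and h: "0 \<le> h"
  shows "norm (integral {c..c + h} z - h *\<^sub>R z c) \<le> L * h * h"
proof -
  have "z integrable_on {c..c + h}"
    using integrable_continuous_real lipschitz_on_continuous_on[OF L] by blast
  then have "((\<lambda>t. z t - z c) has_integral (integral {c..c + h} z - h *\<^sub>R z c)) {c..c + h}"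
    using has_integral_diff[OF integrable_integral has_integral_const_real[of "z c" c "c + h"]] h
    by simp
  moreover have "AE t in lebesgue_on {c..c + h}. norm (z t - z c) \<le> L * h"
  proof (rule AE_I2)
    fix t assume "t \<in> space (lebesgue_on {c..c + h})"
    then have "t \<in> {c..c + h}" by simp
    then have "norm (z t - z c) \<le> L * dist t c" "dist t c \<le> h"
      using lipschitz_onD[OF L, of t c] h by (auto simp: dist_norm dist_real_def)
    then show "norm (z t - z c) \<le> L * h"
      using lipschitz_on_nonneg[OF L] by (meson mult_left_mono order_trans)
  qed
  ultimately show ?thesis
    using has_integral_bound_AE[of _ _ c "c + h" "L * h"] h lipschitz_on_nonneg[OF L] by simp
qed

lemma integral_forward_difference:
  fixes z :: "real \<Rightarrow> 'a::euclidean_space"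
  assumes z: "continuous_on {a..b + h} z" and "a \<le> b" "0 \<le> h"
  shows "integral {a..b} (\<lambda>t. z (t + h) - z t) = integral {b..b + h} z - integral {a..a + h} z"
proof -
  have int: "z integrable_on {c..d}" if "{c..d} \<subseteq> {a..b + h}" for c d
    using integrable_continuous_real continuous_on_subset[OF z that] by blast
  have shift: "integral {a..b} (\<lambda>t. z (t + h)) = integral {a + h..b + h} z"
    using integral_shift_Icc_real[of a b z h] by (simp add: o_def add.commute)
  have "integral {a..a + h} z + integral {a + h..b + h} z = integral {a..b + h} z"
    "integral {a..b} z + integral {b..b + h} z = integral {a..b + h} z"
    using assms by (auto intro!: Henstock_Kurzweil_Integration.integral_combine int)
  moreover have "(\<lambda>t. z (t + h)) integrable_on {a..b}"
    using integrable_on_shift_Icc_real[of z h a b] int[of "a + h" "b + h"] assms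
    by (simp add: o_def add.commute)
  ultimately show ?thesis
    using shift int[of a b] assms by (simp add: integral_diff algebra_simps)
qed

lemma lipschitz_difference_quotient_integral_LIMSEQ:
  fixes z :: "real \<Rightarrow> 'a::euclidean_space"
  assumes L: "L-lipschitz_on UNIV z" and ab: "a \<le> b"
  shows "(\<lambda>n. integral {a..b} (\<lambda>t. (z (t + 1 / real (Suc n)) - z t) /\<^sub>R (1 / real (Suc n))))
    \<longlonglongrightarrow> z b - z a"
proof -
  let ?h = "\<lambda>n. 1 / real (Suc n)"
  let ?E = "\<lambda>c h. integral {c..c + h} z - h *\<^sub>R z c"
  have Lc: "L-lipschitz_on {c..d} z" for c d by (rule lipschitz_on_subset[OF L]) auto
  have bound: "norm (integral {a..b} (\<lambda>t. (z (t + h) - z t) /\<^sub>R h) - (z b - z a)) \<le> 2 * L * h"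
    if h: "0 < h" for h
  proof -
    have "continuous_on {a..b + h} z"
      using lipschitz_on_continuous_on[OF Lc] by blast
    then have "integral {a..b} (\<lambda>t. z (t + h) - z t) = integral {b..b + h} z - integral {a..a + h} z"
      using ab h by (simp add: integral_forward_difference)
    moreover have "integral {a..b} (\<lambda>t. (z (t + h) - z t) /\<^sub>R h)
        = integral {a..b} (\<lambda>t. z (t + h) - z t) /\<^sub>R h"
      by (rule integral_cmul)
    ultimately have "integral {a..b} (\<lambda>t. (z (t + h) - z t) /\<^sub>R h) - (z b - z a)
        = (?E b h - ?E a h) /\<^sub>R h"
      using h by (simp add: scaleR_diff_right)
    moreover have "norm (?E b h - ?E a h) \<le> 2 * L * h * h"
      using norm_triangle_ineq4[of "?E b h" "?E a h"]
        norm_integral_minus_left_value_le[OF Lc[of b "b + h"]]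
        norm_integral_minus_left_value_le[OF Lc[of a "a + h"]] h by simp
    ultimately show ?thesis
      using h by (simp add: inverse_eq_divide pos_divide_le_eq)
  qed
  have "(\<lambda>n. 2 * L * ?h n) \<longlonglongrightarrow> 0"
    using tendsto_mult_right_zero[OF LIMSEQ_Suc[OF lim_inverse_n'], of "2 * L"] by simp
  then have "(\<lambda>n. integral {a..b} (\<lambda>t. (z (t + ?h n) - z t) /\<^sub>R ?h n) - (z b - z a)) \<longlonglongrightarrow> 0"
    by (rule Lim_null_comparison[rotated]) (intro always_eventually allI bound, simp)
  then show ?thesis by (simp add: LIM_zero_iff)
qed

lemma lipschitz_on_clamp:
  fixes z :: "real \<Rightarrow> 'a::metric_space" and a b :: real
  assumes L: "L-lipschitz_on {a..b} z" and ab: "a \<le> b"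
  shows "L-lipschitz_on UNIV (\<lambda>t. z (max a (min t b)))"
proof (rule lipschitz_onI[OF _ lipschitz_on_nonneg[OF L]])
  fix s t :: real
  have "dist (z (max a (min s b))) (z (max a (min t b))) \<le> L * dist (max a (min s b)) (max a (min t b))"
    using ab by (intro lipschitz_onD[OF L]) auto
  also have "\<dots> \<le> L * dist s t"
    by (intro mult_left_mono[OF _ lipschitz_on_nonneg[OF L]]) (auto simp: dist_real_def)
  finally show "dist (z (max a (min s b))) (z (max a (min t b))) \<le> L * dist s t" .
qed

lemma clamp_difference_quotient_LIMSEQ:
  fixes z :: "real \<Rightarrow> 'a::real_normed_vector"
  assumes t: "t \<in> {a<..<b}" and "(z has_vector_derivative r) (at t)"
  shows "(\<lambda>n. (z (max a (min (t + 1 / real (Suc n)) b)) - z (max a (min t b))) /\<^sub>R (1 / real (Suc n)))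
    \<longlonglongrightarrow> r"
proof -
  let ?h = "\<lambda>n. 1 / real (Suc n)"
  have "?h \<longlonglongrightarrow> 0" using LIMSEQ_Suc[OF lim_inverse_n'] by simp
  then have "eventually (\<lambda>n. ?h n < b - t) sequentially" using t by (intro order_tendstoD) auto
  then have "eventually (\<lambda>n. (z (t + ?h n) - z t) /\<^sub>R ?h n
      = (z (max a (min (t + ?h n) b)) - z (max a (min t b))) /\<^sub>R ?h n) sequentially"
  proof eventually_elim
    case (elim n)
    have "0 < ?h n" by simp
    moreover have "a < t" "t < b" using t by auto
    ultimately have "a \<le> t + ?h n" "t + ?h n \<le> b" using elim by linarith+
    then have "max a (min (t + ?h n) b) = t + ?h n" "max a (min t b) = t"
      using \<open>a < t\<close> \<open>t < b\<close> by simp_all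
    then show ?case by simp
  qed
  with difference_quotient_LIMSEQ[OF assms(2)] show ?thesis
    by (rule Lim_transform_eventually)
qed

(* Dominated convergence for the forward difference quotients of the clamped extension of z. *)
lemma lipschitz_on_has_integral_derivative:
  fixes z :: "real \<Rightarrow> 'a::euclidean_space"
  assumes ab: "a \<le> b" and L: "L-lipschitz_on {a..b} z" and N: "negligible N"
    and D: "\<And>t. t \<in> {a<..<b} \<Longrightarrow> t \<notin> N \<Longrightarrow> (z has_vector_derivative r t) (at t)"
  shows "(r has_integral (z b - z a)) {a..b}"
proof -
  define ze where "ze t = z (max a (min t b))" for t
  have ze: "L-lipschitz_on UNIV ze" unfolding ze_def by (rule lipschitz_on_clamp[OF L ab])
  define h where "h n = 1 / real (Suc n)" for n
  let ?N = "N \<union> {a, b}"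
  define q where "q n t = (if t \<in> ?N then 0 else (ze (t + h n) - ze t) /\<^sub>R h n)" for n t
  have N': "negligible ?N" using N by simp
  have q_int: "(q n has_integral integral {a..b} (\<lambda>t. (ze (t + h n) - ze t) /\<^sub>R h n)) {a..b}" for n
  proof (rule has_integral_spike[OF N' _ integrable_integral])
    have "continuous_on {a..b} (\<lambda>t. ze (t + h n))"
      by (rule continuous_on_compose2[OF lipschitz_on_continuous_on[OF ze]]) (auto intro!: continuous_intros)
    moreover have "continuous_on {a..b} ze"
      using continuous_on_subset[OF lipschitz_on_continuous_on[OF ze]] by blast
    ultimately show "(\<lambda>t. (ze (t + h n) - ze t) /\<^sub>R h n) integrable_on {a..b}"
      by (intro integrable_continuous_real continuous_intros)
  qed (auto simp: q_def)
  have q_bound: "norm (q n t) \<le> L" for n t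
    using lipschitz_onD[OF ze, of "t + h n" t] lipschitz_on_nonneg[OF L]
    by (simp add: q_def h_def dist_norm divide_simps mult.commute)
  have q_lim: "(\<lambda>n. q n t) \<longlonglongrightarrow> (if t \<in> ?N then 0 else r t)" if "t \<in> {a..b}" for t
    using that clamp_difference_quotient_LIMSEQ[OF _ D, of t]
    by (cases "t \<in> ?N") (auto simp: q_def ze_def h_def)
  have "((\<lambda>t. if t \<in> ?N then 0 else r t) has_integral (ze b - ze a)) {a..b}"
  proof (rule has_integral_dominated_convergence[OF q_int integrable_const_ivl])
    show "\<forall>t\<in>{a..b}. norm (q n t) \<le> L" for n using q_bound by blast
    show "\<forall>t\<in>{a..b}. (\<lambda>n. q n t) \<longlonglongrightarrow> (if t \<in> ?N then 0 else r t)"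
      using q_lim by blast
    show "(\<lambda>n. integral {a..b} (\<lambda>t. (ze (t + h n) - ze t) /\<^sub>R h n)) \<longlonglongrightarrow> ze b - ze a"
      unfolding h_def by (rule lipschitz_difference_quotient_integral_LIMSEQ[OF ze ab])
  qed
  moreover have "ze b = z b" "ze a = z a" using ab by (auto simp: ze_def)
  ultimately have "((\<lambda>t. if t \<in> ?N then 0 else r t) has_integral (z b - z a)) {a..b}"
    by simp
  then show ?thesis
    by (rule has_integral_spike[OF N', rotated]) auto
qed

lemma lipschitz_on_vector_derivative_absolutely_integrable:
  fixes z :: "real \<Rightarrow> 'a::euclidean_space"
  assumes ab: "a \<le> b" and L: "L-lipschitz_on {a..b} z" and N: "negligible N"
    and D: "\<And>t. t \<in> {a<..<b} \<Longrightarrow> t \<notin> N \<Longrightarrow> (z has_vector_derivative r t) (at t)"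
  shows "(\<lambda>t. vector_derivative z (at t)) absolutely_integrable_on {a..b}"
proof -
  let ?N = "N \<union> {a, b}"
  have N': "negligible ?N" using N by simp
  define r' where "r' t = (if t \<in> ?N then 0 else r t)" for t
  have "(r' has_integral (z b - z a)) {a..b}"
    using has_integral_spike[OF N' _ lipschitz_on_has_integral_derivative[OF ab L N D]]
    by (simp add: r'_def)
  moreover have "norm (r' t) \<le> L" if "t \<in> {a..b}" for t
    using that lipschitz_on_vector_derivative_le[OF L _ D] lipschitz_on_nonneg[OF L]
    by (auto simp: r'_def)
  ultimately have "r' absolutely_integrable_on {a..b}"
    by (intro absolutely_integrable_integrable_bound[where g = "\<lambda>_. L"])
      (auto intro: integrable_const_ivl)
  then show ?thesis
  proof (rule absolutely_integrable_spike[OF _ N'])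
    fix t assume "t \<in> {a..b} - ?N"
    then show "vector_derivative z (at t) = r' t"
      using vector_derivative_at[OF D] by (auto simp: r'_def)
  qed
qed

lemma is_solutionE:
  assumes "is_solution \<tau> T \<phi> rhs x"
  obtains L N where "L-lipschitz_on {0..T} x" "negligible N"
    "\<And>t. t \<in> {0..T} \<Longrightarrow> t \<notin> N \<Longrightarrow> (x has_vector_derivative rhs t) (at t)"
proof -
  obtain L where "L-lipschitz_on {0..T} x"
    and D: "AE t in lebesgue_on {0..T}. (x has_vector_derivative rhs t) (at t)"
    using assms unfolding is_solution_def by blast
  moreover obtain N where "negligible N"
    "\<And>t. t \<in> {0..T} \<Longrightarrow> t \<notin> N \<Longrightarrow> (x has_vector_derivative rhs t) (at t)"
    using AE_lebesgue_on_negligible_exception[OF D] by auto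
  ultimately show thesis using that by blast
qed

lemma is_solution_has_integral:
  assumes sol: "is_solution \<tau> T \<phi> rhs x" and st: "0 \<le> s" "s \<le> t" "t \<le> T"
  shows "(rhs has_integral (x t - x s)) {s..t}"
proof -
  obtain L N where L: "L-lipschitz_on {0..T} x" and N: "negligible N"
    and D: "\<And>r. r \<in> {0..T} \<Longrightarrow> r \<notin> N \<Longrightarrow> (x has_vector_derivative rhs r) (at r)"
    using is_solutionE[OF sol] by blast
  show ?thesis
    by (rule lipschitz_on_has_integral_derivative[OF st(2) lipschitz_on_subset[OF L] N D])
      (use st in auto)
qed

lemma is_solution_vector_derivative_AE:
  assumes "is_solution \<tau> T \<phi> rhs x"
  shows "AE t in lebesgue_on {0..T}. vector_derivative x (at t) = rhs t"
  using assms unfolding is_solution_def by (auto elim!: eventually_mono intro: vector_derivative_at)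

lemma is_solution_integrable_vector_derivative:
  assumes sol: "is_solution \<tau> T \<phi> rhs x" and T: "0 \<le> T"
  shows "integrable (lebesgue_on {0..T}) (\<lambda>t. vector_derivative x (at t))"
proof -
  obtain L N where L: "L-lipschitz_on {0..T} x" and N: "negligible N"
    and D: "\<And>r. r \<in> {0..T} \<Longrightarrow> r \<notin> N \<Longrightarrow> (x has_vector_derivative rhs r) (at r)"
    using is_solutionE[OF sol] by blast
  have "(\<lambda>t. vector_derivative x (at t)) absolutely_integrable_on {0..T}"
    by (rule lipschitz_on_vector_derivative_absolutely_integrable[OF T L N D]) auto
  then show ?thesis by (simp add: integrable_restrict_space set_integrable_def)
qed

section \<open>Suprema over intervals and a Gronwall bound\<close>

definition running_sup :: "(real \<Rightarrow> real) \<Rightarrow> real \<Rightarrow> real \<Rightarrow> real" where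
  "running_sup g a t = Sup (g ` {a..t})"

lemma running_sup_upper:
  assumes "continuous_on {a..t} g" "s \<in> {a..t}"
  shows "g s \<le> running_sup g a t"
  unfolding running_sup_def
  using assms compact_continuous_image[OF assms(1) compact_Icc]
  by (auto intro!: cSUP_upper bounded_imp_bdd_above compact_imp_bounded)

lemma running_sup_least:
  assumes "a \<le> t" "\<And>s. s \<in> {a..t} \<Longrightarrow> g s \<le> c"
  shows "running_sup g a t \<le> c"
  unfolding running_sup_def using assms by (auto intro!: cSUP_least)

lemma running_sup_step:
  assumes g: "continuous_on {a..t} g" and st: "a \<le> s" "s \<le> t" and c: "0 \<le> c"
    and step: "\<And>r. r \<in> {s..t} \<Longrightarrow> g r \<le> g s + c"
  shows "running_sup g a t \<le> running_sup g a s + c"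
proof (rule running_sup_least)
  have g': "continuous_on {a..s} g" using continuous_on_subset[OF g] st by auto
  fix r assume r: "r \<in> {a..t}"
  show "g r \<le> running_sup g a s + c"
  proof (cases "r \<le> s")
    case True
    then show ?thesis using running_sup_upper[OF g', of r] r c by auto
  next
    case False
    then show ?thesis using step[of r] running_sup_upper[OF g', of s] r st by auto
  qed
qed (use st in auto)

lemma running_sup_le_shift:
  assumes "a \<le> t" and g: "continuous_on {a'..t'} g"
    and shift: "\<And>s. s \<in> {a..t} \<Longrightarrow> \<exists>s'\<in>{a'..t'}. f s \<le> g s' + d"
  shows "running_sup f a t \<le> running_sup g a' t' + d"
proof (rule running_sup_least[OF assms(1)])
  fix s assume "s \<in> {a..t}"
  then obtain s' where "s' \<in> {a'..t'}" "f s \<le> g s' + d" using shift by blast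
  then show "f s \<le> running_sup g a' t' + d" using running_sup_upper[OF g] by fastforce
qed

lemma continuous_on_running_sup_window:
  fixes g :: "real \<Rightarrow> real"
  assumes g: "continuous_on {a - \<tau>..b} g" and \<tau>: "0 \<le> \<tau>"
  shows "continuous_on {a..b} (\<lambda>t. running_sup g (t - \<tau>) t)"
  unfolding continuous_on_iff
proof (intro ballI allI impI)
  fix t e :: real assume t: "t \<in> {a..b}" and e: "0 < e"
  obtain d where d: "d > 0"
    "\<And>s s'. s \<in> {a - \<tau>..b} \<Longrightarrow> s' \<in> {a - \<tau>..b} \<Longrightarrow> dist s' s < d \<Longrightarrow> dist (g s') (g s) < e / 2"
    using compact_uniformly_continuous[OF g compact_Icc] e unfolding uniformly_continuous_on_def
    by (metis half_gt_zero)
  have gw: "continuous_on {r - \<tau>..r} g" if "r \<in> {a..b}" for r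
    using continuous_on_subset[OF g] that by auto
  have shift: "running_sup g (r - \<tau>) r \<le> running_sup g (r' - \<tau>) r' + e / 2"
    if r: "r \<in> {a..b}" "r' \<in> {a..b}" "dist r r' < d" for r r'
  proof (rule running_sup_le_shift[OF _ gw[OF r(2)]])
    fix s assume s: "s \<in> {r - \<tau>..r}"
    moreover have "dist (g s) (g (s + (r' - r))) < e / 2"
      using s r by (intro d(2)) (auto simp: dist_real_def)
    then have "g s \<le> g (s + (r' - r)) + e / 2"
      unfolding dist_real_def by linarith
    moreover have "s + (r' - r) \<in> {r' - \<tau>..r'}" using s by auto
    ultimately show "\<exists>s'\<in>{r' - \<tau>..r'}. g s \<le> g s' + e / 2" by blast
  qed (use \<tau> in simp)
  show "\<exists>d>0. \<forall>t'\<in>{a..b}. dist t' t < d \<longrightarrow>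
      dist (running_sup g (t' - \<tau>) t') (running_sup g (t - \<tau>) t) < e"
    using d(1) shift[OF t] shift[OF _ t] e
    by (intro exI[of _ d]) (fastforce simp: dist_real_def dist_commute abs_le_iff)
qed

lemma short_step_growth_bound:
  fixes w :: "real \<Rightarrow> real"
  assumes h: "0 < h" and \<rho>: "1 \<le> \<rho>" and a: "0 \<le> a" "w 0 \<le> a" and T: "0 \<le> T"
    and step: "\<And>s t. 0 \<le> s \<Longrightarrow> s \<le> t \<Longrightarrow> t \<le> T \<Longrightarrow> t - s \<le> h \<Longrightarrow> w t \<le> a + \<rho> * w s"
  shows "w T \<le> a * (real (nat \<lceil>T / h\<rceil>) + 1) * \<rho> ^ nat \<lceil>T / h\<rceil>"
proof -
  have grid: "w (min (real j * h) T) \<le> a * (real j + 1) * \<rho> ^ j" for j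
  proof (induction j)
    case 0
    then show ?case using a T by simp
  next
    case (Suc j)
    have "w (min (real (Suc j) * h) T) \<le> a + \<rho> * w (min (real j * h) T)"
      using h T by (intro step) (auto simp: algebra_simps min_def)
    also have "\<dots> \<le> a * \<rho> ^ Suc j + \<rho> * (a * (real j + 1) * \<rho> ^ j)"
      using Suc \<rho> mult_left_mono[OF one_le_power[OF \<rho>] a(1), of "Suc j"]
      by (intro add_mono mult_left_mono) auto
    also have "\<dots> = a * (real (Suc j) + 1) * \<rho> ^ Suc j"
      by (simp add: algebra_simps)
    finally show ?case .
  qed
  have "T \<le> real (nat \<lceil>T / h\<rceil>) * h"
    using h by (simp add: pos_divide_le_eq[symmetric]) linarith
  then show ?thesis using grid[of "nat \<lceil>T / h\<rceil>"] by (simp add: min_absorb2)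
qed

(* Steps of length 1 / (2 c + 1) let the implicit term (t - s) c w t be absorbed into w t / 2,
   so that each step at most doubles the bound. *)
definition gronwall_factor :: "real \<Rightarrow> real \<Rightarrow> real" where
  "gronwall_factor c T = (real (nat \<lceil>T * (2 * c + 1)\<rceil>) + 1) * 2 ^ nat \<lceil>T * (2 * c + 1)\<rceil>"

lemma gronwall_factor_ge_1: "1 \<le> gronwall_factor c T"
  unfolding gronwall_factor_def
  by (rule order_trans[of _ "1 * 1"], simp, intro mult_mono) auto

lemma gronwall_step_bound:
  fixes w :: "real \<Rightarrow> real"
  assumes a: "0 \<le> a" and c: "0 \<le> c" and T: "0 \<le> T" and w: "\<And>t. t \<in> {0..T} \<Longrightarrow> 0 \<le> w t"
    and step: "\<And>s t. 0 \<le> s \<Longrightarrow> s \<le> t \<Longrightarrow> t \<le> T \<Longrightarrow> w t \<le> w s + a + (t - s) * c * w t"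
  shows "w T \<le> (w 0 + 2 * a) * gronwall_factor c T"
proof -
  define h where "h = 1 / (2 * c + 1)"
  have h: "0 < h" "h * c \<le> 1 / 2" using c by (auto simp: h_def field_simps)
  have "w t \<le> (w 0 + 2 * a) + 2 * w s" if st: "0 \<le> s" "s \<le> t" "t \<le> T" "t - s \<le> h" for s t
  proof -
    have "(t - s) * c * w t \<le> h * c * w t"
      using st c w[of t] by (intro mult_right_mono) auto
    also have "\<dots> \<le> 1 / 2 * w t"
      using mult_right_mono[OF h(2) w[of t]] st by auto
    moreover have "0 \<le> w 0" using w T by simp
    ultimately show ?thesis using step[OF st(1-3)] by linarith
  qed
  then have "w T \<le> (w 0 + 2 * a) * (real (nat \<lceil>T / h\<rceil>) + 1) * 2 ^ nat \<lceil>T / h\<rceil>"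
    using w[of 0] a T by (intro short_step_growth_bound[OF h(1)]) auto
  then show ?thesis by (simp add: gronwall_factor_def h_def mult.assoc)
qed

lemma norm_le_card_mult_of_components_le:
  fixes x :: "real^'n"
  assumes "\<And>i. \<bar>x $ i\<bar> \<le> c"
  shows "norm x \<le> real CARD('n) * c"
proof -
  have "norm x \<le> (\<Sum>i\<in>UNIV. \<bar>x $ i\<bar>)" by (rule norm_le_l1_cart)
  also have "\<dots> \<le> (\<Sum>i\<in>(UNIV::'n set). c)" by (rule sum_mono) (rule assms)
  finally show ?thesis by simp
qed

lemma norm_sum4_le:
  fixes a b c d e :: "'a::real_normed_vector"
  assumes "e = a + b + c - d"
  shows "norm e \<le> norm a + norm b + norm c + norm d"
  unfolding assms
  using norm_triangle_ineq4[of "a + b + c" d] norm_triangle_ineq[of "a + b" c] norm_triangle_ineq[of a b]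
  by linarith

lemma norm_matrix_vector_mult_le:
  fixes A :: "real^'m^'n"
  shows "norm (A *v v) \<le> norm A * norm v"
proof (rule power2_le_imp_le)
  have "(norm (A *v v))\<^sup>2 = (\<Sum>i\<in>UNIV. (A $ i \<bullet> v)\<^sup>2)"
    unfolding power2_norm_eq_inner by (simp add: inner_vec_def matrix_vector_mul_component power2_eq_square)
  also have "\<dots> \<le> (\<Sum>i\<in>UNIV. (norm (A $ i))\<^sup>2 * (norm v)\<^sup>2)"
    by (intro sum_mono) (metis abs_le_square_iff abs_of_nonneg Cauchy_Schwarz_ineq2 norm_ge_zero
        power_mult_distrib zero_le_mult_iff)
  also have "\<dots> = (norm A * norm v)\<^sup>2"
    by (simp add: power_mult_distrib sum_distrib_right power2_norm_eq_inner inner_vec_def)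
  finally show "(norm (A *v v))\<^sup>2 \<le> (norm A * norm v)\<^sup>2" .
qed simp

lemma norm_transpose:
  fixes A :: "real^'m^'n"
  shows "norm (transpose A) = norm A"
proof -
  have "(norm (transpose A))\<^sup>2 = (norm A)\<^sup>2"
    by (simp add: power2_norm_eq_inner inner_vec_def transpose_def sum.swap[of _ "UNIV::'n set"])
  then show ?thesis by (simp add: power2_eq_iff_nonneg)
qed

lemma lipschitz_on_pair_diff_le:
  assumes "L-lipschitz_on UNIV (\<lambda>p. F (fst p) (snd p))"
  shows "norm (F a b - F c d) \<le> L * (norm (a - c) + norm (b - d))"
proof -
  have "norm (F a b - F c d) \<le> L * dist (a, b) (c, d)"
    using lipschitz_onD[OF assms, of "(a, b)" "(c, d)"] by (simp add: dist_norm)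
  also have "\<dots> \<le> L * (norm (a - c) + norm (b - d))"
    using norm_Pair_le[of "a - c" "b - d"] lipschitz_on_nonneg[OF assms]
    by (intro mult_left_mono) (auto simp: dist_norm)
  finally show ?thesis .
qed

section \<open>The delay terms\<close>

lemma maxhist_component: "maxhist \<tau> y t $ i = running_sup (\<lambda>s. y s $ i) (t - \<tau>) t"
  by (simp add: maxhist_def running_sup_def)

lemma continuous_on_maxhist:
  fixes y :: "real \<Rightarrow> real^'n"
  assumes "continuous_on {a - \<tau>..b} y" and "0 \<le> \<tau>"
  shows "continuous_on {a..b} (maxhist \<tau> y)"
  unfolding maxhist_def running_sup_def[symmetric]
  by (intro continuous_on_vec_lambda continuous_on_running_sup_window continuous_intros assms)

lemma norm_maxhist_diff_le:
  fixes y z :: "real \<Rightarrow> real^'n"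
  assumes y: "continuous_on {t - \<tau>..t} y" and z: "continuous_on {t - \<tau>..t} z" and "0 \<le> \<tau>"
    and W: "\<And>s. s \<in> {t - \<tau>..t} \<Longrightarrow> norm (y s - z s) \<le> W"
  shows "norm (maxhist \<tau> y t - maxhist \<tau> z t) \<le> real CARD('n) * W"
proof (rule norm_le_card_mult_of_components_le)
  fix i
  have "\<exists>s'\<in>{t - \<tau>..t}. y s $ i \<le> z s' $ i + W" "\<exists>s'\<in>{t - \<tau>..t}. z s $ i \<le> y s' $ i + W"
    if s: "s \<in> {t - \<tau>..t}" for s
    using component_le_norm_cart[of "y s - z s" i] W[OF s] s
    by (auto simp: abs_le_iff intro!: bexI[of _ s])
  then have "running_sup (\<lambda>s. y s $ i) (t - \<tau>) t \<le> running_sup (\<lambda>s. z s $ i) (t - \<tau>) t + W"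
    "running_sup (\<lambda>s. z s $ i) (t - \<tau>) t \<le> running_sup (\<lambda>s. y s $ i) (t - \<tau>) t + W"
    using assms(3) by (auto intro!: running_sup_le_shift continuous_intros y z)
  then show "\<bar>(maxhist \<tau> y t - maxhist \<tau> z t) $ i\<bar> \<le> W"
    by (simp add: maxhist_component abs_le_iff)
qed

lemma log_integral_exp_bounds:
  fixes y :: "real \<Rightarrow> real"
  assumes y: "continuous_on {a..b} y" and k: "0 < k"
    and upper: "\<And>s. s \<in> {a..b} \<Longrightarrow> y s \<le> m"
    and sub: "a \<le> c" "c + \<eta> \<le> b" "0 < \<eta>"
    and lower: "\<And>s. s \<in> {c..c + \<eta>} \<Longrightarrow> m' \<le> y s"
  shows "m' + ln \<eta> / k \<le> (1 / k) * ln (integral {a..b} (\<lambda>s. exp (k * y s)))"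
    and "(1 / k) * ln (integral {a..b} (\<lambda>s. exp (k * y s))) \<le> m + ln (b - a) / k"
proof -
  let ?f = "\<lambda>s. exp (k * y s)"
  have int_ab: "?f integrable_on {a..b}"
    by (intro integrable_continuous_real continuous_intros y)
  have int_c: "?f integrable_on {c..c + \<eta>}"
    by (rule integrable_on_subinterval[OF int_ab]) (use sub in auto)
  have "\<eta> * exp (k * m') = integral {c..c + \<eta>} (\<lambda>_. exp (k * m'))"
    using sub by simp
  also have "\<dots> \<le> integral {c..c + \<eta>} ?f"
    using lower k by (intro integral_le int_c) auto
  also have "\<dots> \<le> integral {a..b} ?f"
    by (rule integral_subset_le) (use sub int_c int_ab in auto)
  finally have lo: "\<eta> * exp (k * m') \<le> integral {a..b} ?f" .
  have "integral {a..b} ?f \<le> integral {a..b} (\<lambda>_. exp (k * m))"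
    using upper k by (intro integral_le int_ab) auto
  then have hi: "integral {a..b} ?f \<le> (b - a) * exp (k * m)" using sub by simp
  have pos: "0 < \<eta> * exp (k * m')" using sub by simp
  have "ln \<eta> + k * m' \<le> ln (integral {a..b} ?f)"
    using ln_mono[OF lo pos] sub by (simp add: ln_mult)
  then have "(ln \<eta> + k * m') / k \<le> ln (integral {a..b} ?f) / k"
    using k by (intro divide_right_mono) auto
  then show "m' + ln \<eta> / k \<le> (1 / k) * ln (integral {a..b} ?f)"
    using k by (simp add: add_divide_distrib)
  have "ln (integral {a..b} ?f) \<le> ln (b - a) + k * m"
    using ln_mono[OF hi order_less_le_trans[OF pos lo]] sub by (simp add: ln_mult)
  then have "ln (integral {a..b} ?f) / k \<le> (ln (b - a) + k * m) / k"
    using k by (intro divide_right_mono) auto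
  then show "(1 / k) * ln (integral {a..b} ?f) \<le> m + ln (b - a) / k"
    using k by (simp add: add_divide_distrib)
qed

lemma LIE_component: "LIE k \<tau> y t $ i = (1 / k) * ln (integral {t - \<tau>..t} (\<lambda>s. exp (k * y s $ i)))"
  by (simp add: LIE_def)

lemma norm_LIE_le:
  fixes y :: "real \<Rightarrow> real^'n"
  assumes y: "continuous_on {t - \<tau>..t} y" and \<tau>: "0 < \<tau>" and k: "1 \<le> k"
    and W: "\<And>s. s \<in> {t - \<tau>..t} \<Longrightarrow> norm (y s) \<le> W"
  shows "norm (LIE k \<tau> y t) \<le> real CARD('n) * (W + \<bar>ln \<tau>\<bar>)"
proof (rule norm_le_card_mult_of_components_le)
  fix i
  have yi: "continuous_on {t - \<tau>..t} (\<lambda>s. y s $ i)" by (intro continuous_intros y)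
  have Wi: "\<bar>y s $ i\<bar> \<le> W" if "s \<in> {t - \<tau>..t}" for s
    using W[OF that] component_le_norm_cart[of "y s" i] by simp
  then have upper: "y s $ i \<le> W" and lower: "- W \<le> y s $ i" if "s \<in> {t - \<tau>..t}" for s
    using Wi[OF that] by (auto simp: abs_le_iff)
  have "- W + ln \<tau> / k \<le> LIE k \<tau> y t $ i" "LIE k \<tau> y t $ i \<le> W + ln \<tau> / k"
    using log_integral_exp_bounds[OF yi _ upper order_refl _ \<tau> lower] k
    by (simp_all add: LIE_component)
  moreover have "\<bar>ln \<tau> / k\<bar> \<le> \<bar>ln \<tau>\<bar>"
    using k by (simp add: abs_divide divide_le_eq_1 mult_le_cancel_left1 divide_le_eq)
  ultimately show "\<bar>LIE k \<tau> y t $ i\<bar> \<le> W + \<bar>ln \<tau>\<bar>" by linarith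
qed

lemma norm_LIE_minus_maxhist_le:
  fixes y :: "real \<Rightarrow> real^'n"
  assumes y: "continuous_on {t - \<tau>..t} y" and k: "0 < k" and \<eta>: "0 < \<eta>" "\<eta> \<le> \<tau>"
    and osc: "\<And>s s'. s \<in> {t - \<tau>..t} \<Longrightarrow> s' \<in> {t - \<tau>..t} \<Longrightarrow> \<bar>s - s'\<bar> \<le> \<eta> \<Longrightarrow>
      norm (y s - y s') \<le> \<delta>"
  shows "norm (LIE k \<tau> y t - maxhist \<tau> y t) \<le> real CARD('n) * (\<delta> + (\<bar>ln \<eta>\<bar> + \<bar>ln \<tau>\<bar>) / k)"
proof (rule norm_le_card_mult_of_components_le)
  fix i
  let ?y = "\<lambda>s. y s $ i"
  have yi: "continuous_on {t - \<tau>..t} ?y" by (intro continuous_intros y)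
  obtain s0 where s0: "s0 \<in> {t - \<tau>..t}" "\<And>s. s \<in> {t - \<tau>..t} \<Longrightarrow> ?y s \<le> ?y s0"
    using continuous_attains_sup[OF compact_Icc _ yi] \<eta> by auto
  have max: "maxhist \<tau> y t $ i = ?y s0"
    unfolding maxhist_component running_sup_def using s0 by (intro cSup_eq_maximum) auto
  (* Near a maximiser s0 the component stays within \<delta> of its maximum on a window of length \<eta>;
     this window bounds the integral from below. *)
  define c where "c = max (t - \<tau>) (s0 - \<eta>)"
  have c: "t - \<tau> \<le> c" "c + \<eta> \<le> t" using s0 \<eta> by (auto simp: c_def)
  have near: "?y s0 - \<delta> \<le> ?y s" if "s \<in> {c..c + \<eta>}" for s
  proof -
    have "norm (y s - y s0) \<le> \<delta>"
      using that s0 c by (intro osc) (auto simp: c_def)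
    then show ?thesis
      using component_le_norm_cart[of "y s - y s0" i] by (simp add: abs_le_iff)
  qed
  have "0 \<le> \<delta>" using osc[OF s0(1) s0(1)] \<eta> by simp
  moreover have "?y s0 - \<delta> + ln \<eta> / k \<le> LIE k \<tau> y t $ i" "LIE k \<tau> y t $ i \<le> ?y s0 + ln \<tau> / k"
    using log_integral_exp_bounds[OF yi k s0(2) c \<eta>(1) near] by (simp_all add: LIE_component)
  moreover have "- \<bar>ln \<eta>\<bar> \<le> ln \<eta>" by (metis abs_ge_minus_self minus_le_iff)
  then have "- (\<bar>ln \<eta>\<bar> / k) \<le> ln \<eta> / k" "ln \<tau> / k \<le> \<bar>ln \<tau>\<bar> / k"
    using divide_right_mono[of _ _ k] k by fastforce+
  moreover have "0 \<le> \<bar>ln \<eta>\<bar> / k" "0 \<le> \<bar>ln \<tau>\<bar> / k" using k by simp_all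
  ultimately show "\<bar>(LIE k \<tau> y t - maxhist \<tau> y t) $ i\<bar> \<le> \<delta> + (\<bar>ln \<eta>\<bar> + \<bar>ln \<tau>\<bar>) / k"
    unfolding vector_minus_component max add_divide_distrib by (intro abs_leI) linarith+
qed

lemma eventually_le_scaled:
  fixes C :: real
  assumes C: "0 \<le> C" and scaled: "\<And>\<delta>. 0 < \<delta> \<Longrightarrow> eventually (\<lambda>k. P k (C * \<delta>)) F"
    and mono: "\<And>k a b. P k a \<Longrightarrow> a \<le> b \<Longrightarrow> P k b" and e: "0 < e"
  shows "eventually (\<lambda>k. P k e) F"
proof -
  have "C * (e / (C + 1)) \<le> e" using C e by (simp add: field_simps)
  then show ?thesis
    using scaled[of "e / (C + 1)"] C e by (auto elim!: eventually_mono intro: mono)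
qed

lemma tendsto_zero_if_scaled_le:
  fixes f :: "'b \<Rightarrow> 'a::real_normed_vector"
  assumes "0 \<le> C" and "\<And>\<delta>. 0 < \<delta> \<Longrightarrow> eventually (\<lambda>k. norm (f k) \<le> C * \<delta>) F"
  shows "(f \<longlongrightarrow> 0) F"
proof (rule tendstoI)
  fix e :: real assume "0 < e"
  then have "eventually (\<lambda>k. norm (f k) \<le> e / 2) F"
    by (intro eventually_le_scaled[where P = "\<lambda>k e. norm (f k) \<le> e", OF assms]) auto
  then show "eventually (\<lambda>k. dist (f k) 0 < e) F"
    by eventually_elim (use \<open>0 < e\<close> in simp)
qed

lemma uniform_limit_if_scaled_le:
  assumes "0 \<le> C" and "\<And>\<delta>. 0 < \<delta> \<Longrightarrow> eventually (\<lambda>k. \<forall>t\<in>S. dist (f k t) (l t) \<le> C * \<delta>) F"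
  shows "uniform_limit S f l F"
proof (rule uniform_limitI)
  fix e :: real assume "0 < e"
  then have "eventually (\<lambda>k. \<forall>t\<in>S. dist (f k t) (l t) \<le> e / 2) F"
    by (intro eventually_le_scaled[where P = "\<lambda>k e. \<forall>t\<in>S. dist (f k t) (l t) \<le> e", OF assms])
      (auto intro: order_trans)
  then show "eventually (\<lambda>k. \<forall>t\<in>S. dist (f k t) (l t) < e) F"
    by eventually_elim (use \<open>0 < e\<close> in force)
qed

lemma finite_left_net_Icc:
  fixes a b \<eta> :: real
  assumes \<eta>: "0 < \<eta>"
  obtains P where "finite P" "P \<subseteq> {a..b}" "\<And>t. t \<in> {a..b} \<Longrightarrow> \<exists>p\<in>P. p \<le> t \<and> t - p < \<eta>"
proof
  let ?p = "\<lambda>j. a + real j * \<eta>" and ?j = "\<lambda>t. nat \<lfloor>(t - a) / \<eta>\<rfloor>"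
  let ?P = "?p ` {..?j b} \<inter> {a..b}"
  show "finite ?P" "?P \<subseteq> {a..b}" by auto
  fix t assume t: "t \<in> {a..b}"
  have "real (?j t) \<le> (t - a) / \<eta>" "(t - a) / \<eta> < real (?j t) + 1"
    using t \<eta> by (auto simp: of_nat_floor)
  then have close: "?p (?j t) \<le> t" "t - ?p (?j t) < \<eta>"
    using \<eta> by (auto simp: le_divide_eq divide_less_eq algebra_simps)
  have "?j t \<le> ?j b"
    using t \<eta> by (intro nat_mono floor_mono divide_right_mono) auto
  moreover have "?p (?j t) \<in> {a..b}"
    using close(1) t \<eta> by (simp del: of_nat_nat)
  ultimately have "?p (?j t) \<in> ?P" by blast
  with close show "\<exists>p\<in>?P. p \<le> t \<and> t - p < \<eta>" by blast
qed

lemma uniform_limit_equi_lipschitz: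
  fixes F :: "nat \<Rightarrow> real \<Rightarrow> 'a::real_normed_vector"
  assumes lim: "\<And>t. t \<in> {a..b} \<Longrightarrow> (\<lambda>k. F k t) \<longlonglongrightarrow> H t" and H: "continuous_on {a..b} H"
    and lip: "\<And>k s t. s \<in> {a..b} \<Longrightarrow> t \<in> {a..b} \<Longrightarrow> s \<le> t \<Longrightarrow> norm (F k t - F k s) \<le> B * (t - s)"
  shows "uniform_limit {a..b} F H sequentially"
proof (rule uniform_limit_if_scaled_le[of "\<bar>B\<bar> + 2"])
  fix \<delta> :: real assume \<delta>: "0 < \<delta>"
  obtain d where d: "0 < d" "\<And>s t. s \<in> {a..b} \<Longrightarrow> t \<in> {a..b} \<Longrightarrow> dist s t < d \<Longrightarrow> dist (H s) (H t) < \<delta>"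
    using compact_uniformly_continuous[OF H compact_Icc] \<delta> unfolding uniformly_continuous_on_def by metis
  obtain P where P: "finite P" "P \<subseteq> {a..b}" "\<And>t. t \<in> {a..b} \<Longrightarrow> \<exists>p\<in>P. p \<le> t \<and> t - p < min d \<delta>"
    using finite_left_net_Icc[of "min d \<delta>" a b] d(1) \<delta> by (metis min_less_iff_conj)
  have "eventually (\<lambda>k. \<forall>p\<in>P. dist (F k p) (H p) < \<delta>) sequentially"
  proof (rule eventually_ball_finite[OF P(1)], intro ballI)
    fix p assume "p \<in> P"
    then show "eventually (\<lambda>k. dist (F k p) (H p) < \<delta>) sequentially"
      using P(2) \<delta> by (intro tendstoD[OF lim]) auto
  qed
  then show "eventually (\<lambda>k. \<forall>t\<in>{a..b}. dist (F k t) (H t) \<le> (\<bar>B\<bar> + 2) * \<delta>) sequentially"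
  proof (rule eventually_mono, intro ballI)
    fix k t assume net: "\<forall>p\<in>P. dist (F k p) (H p) < \<delta>" and t: "t \<in> {a..b}"
    obtain p where p: "p \<in> P" "p \<le> t" "t - p < min d \<delta>" using P(3)[OF t] by blast
    have "norm (F k t - F k p) \<le> \<bar>B\<bar> * \<delta>"
    proof -
      have "norm (F k t - F k p) \<le> B * (t - p)" using lip[of p t k] P(2) p t by auto
      also have "\<dots> \<le> \<bar>B\<bar> * (t - p)" using p by (intro mult_right_mono) auto
      also have "\<dots> \<le> \<bar>B\<bar> * \<delta>" using p by (intro mult_left_mono) auto
      finally show ?thesis .
    qed
    moreover have "dist (H p) (H t) < \<delta>"
      using p t P(2) by (intro d(2)) (auto simp: dist_real_def)
    moreover have "dist (F k t) (H t) \<le> norm (F k t - F k p) + dist (F k p) (H p) + dist (H p) (H t)"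
      using dist_triangle[of "F k t" "H t" "F k p"] dist_triangle[of "F k p" "H t" "H p"]
      by (simp add: dist_norm)
    moreover have "dist (F k p) (H p) < \<delta>" using net p(1) by blast
    ultimately show "dist (F k t) (H t) \<le> (\<bar>B\<bar> + 2) * \<delta>"
      by (simp add: algebra_simps)
  qed
qed simp

lemma norm_diff_le_glue:
  fixes f :: "real \<Rightarrow> 'a::real_normed_vector"
  assumes left: "\<And>s s'. s \<in> {a..c} \<Longrightarrow> s' \<in> {a..c} \<Longrightarrow> \<bar>s - s'\<bar> \<le> \<eta> \<Longrightarrow> norm (f s - f s') \<le> \<epsilon>"
    and right: "\<And>s s'. s \<in> {c..b} \<Longrightarrow> s' \<in> {c..b} \<Longrightarrow> \<bar>s - s'\<bar> \<le> \<eta> \<Longrightarrow> norm (f s - f s') \<le> \<epsilon>"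
    and s: "s \<in> {a..b}" "s' \<in> {a..b}" "\<bar>s - s'\<bar> \<le> \<eta>"
  shows "norm (f s - f s') \<le> 2 * \<epsilon>"
proof -
  have "0 \<le> \<epsilon>" using left[of s s] right[of s s] s by (cases "s \<le> c") auto
  have across: "norm (f r - f r') \<le> 2 * \<epsilon>" if "r \<in> {a..c}" "r' \<in> {c..b}" "\<bar>r - r'\<bar> \<le> \<eta>" for r r'
    using left[of r c] right[of c r'] that norm_triangle_le[of "f r - f c" "f c - f r'"] by auto
  show ?thesis
    using s left[of s s'] right[of s s'] across[of s s'] across[of s' s] \<open>0 \<le> \<epsilon>\<close>
    by (cases "s \<le> c"; cases "s' \<le> c") (auto simp: abs_minus_commute norm_minus_commute)
qed

section \<open>Weak convergence in L^1 and W^{1,1}\<close>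

lemma Linf_boundE:
  assumes "Linf S g"
  obtains B where "g \<in> borel_measurable (lebesgue_on S)" "AE t in lebesgue_on S. norm (g t) \<le> B" "0 \<le> B"
proof -
  obtain B where "g \<in> borel_measurable (lebesgue_on S)" "AE t in lebesgue_on S. norm (g t) \<le> B"
    using assms unfolding Linf_def by blast
  moreover from this(2) have "AE t in lebesgue_on S. norm (g t) \<le> max B 0"
    by (rule eventually_mono) simp
  ultimately show thesis using that[of "max B 0"] by simp
qed

lemma integrable_inner_Linf:
  fixes f g :: "real \<Rightarrow> 'a::euclidean_space"
  assumes f: "integrable (lebesgue_on S) f" and g: "Linf S g"
  shows "integrable (lebesgue_on S) (\<lambda>t. f t \<bullet> g t)"
proof -
  obtain B where gm: "g \<in> borel_measurable (lebesgue_on S)"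
    and gB: "AE t in lebesgue_on S. norm (g t) \<le> B" and B: "0 \<le> B"
    using Linf_boundE[OF g] by blast
  show ?thesis
  proof (rule Bochner_Integration.integrable_bound)
    show "integrable (lebesgue_on S) (\<lambda>t. B * norm (f t))"
      using f by (intro integrable_mult_right integrable_norm)
    show "(\<lambda>t. f t \<bullet> g t) \<in> borel_measurable (lebesgue_on S)"
      using f gm by (intro borel_measurable_inner) auto
    show "AE t in lebesgue_on S. norm (f t \<bullet> g t) \<le> norm (B * norm (f t))"
      using gB
    proof eventually_elim
      case (elim t)
      have "norm (f t \<bullet> g t) \<le> norm (f t) * norm (g t)" by (simp add: Cauchy_Schwarz_ineq2)
      also have "\<dots> \<le> B * norm (f t)"
        using mult_left_mono[OF elim norm_ge_zero[of "f t"]] by (simp add: mult.commute)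
      finally show ?case using B by simp
    qed
  qed
qed

lemma weak_L1_add:
  fixes f f' :: "nat \<Rightarrow> real \<Rightarrow> 'a::euclidean_space"
  assumes f: "weak_L1 S f h" and f': "weak_L1 S f' h'"
  shows "weak_L1 S (\<lambda>k t. f k t + f' k t) (\<lambda>t. h t + h' t)"
  unfolding weak_L1_def
proof (intro conjI allI impI)
  fix g :: "real \<Rightarrow> 'a" assume g: "Linf S g"
  have int: "integrable (lebesgue_on S) (\<lambda>t. f k t \<bullet> g t)" "integrable (lebesgue_on S) (\<lambda>t. f' k t \<bullet> g t)"
    "integrable (lebesgue_on S) (\<lambda>t. h t \<bullet> g t)" "integrable (lebesgue_on S) (\<lambda>t. h' t \<bullet> g t)" for k
    using f f' g by (auto simp: weak_L1_def intro: integrable_inner_Linf)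
  have "(\<lambda>k. integral\<^sup>L (lebesgue_on S) (\<lambda>t. f k t \<bullet> g t) + integral\<^sup>L (lebesgue_on S) (\<lambda>t. f' k t \<bullet> g t))
      \<longlonglongrightarrow> integral\<^sup>L (lebesgue_on S) (\<lambda>t. h t \<bullet> g t) + integral\<^sup>L (lebesgue_on S) (\<lambda>t. h' t \<bullet> g t)"
    using f f' g unfolding weak_L1_def by (intro tendsto_add) auto
  then show "(\<lambda>k. integral\<^sup>L (lebesgue_on S) (\<lambda>t. (f k t + f' k t) \<bullet> g t))
      \<longlonglongrightarrow> integral\<^sup>L (lebesgue_on S) (\<lambda>t. (h t + h' t) \<bullet> g t)"
    using int by (simp add: inner_add_left)
qed (use f f' in \<open>auto simp: weak_L1_def\<close>)

lemma weak_L1_of_uniform_AE: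
  fixes f :: "nat \<Rightarrow> real \<Rightarrow> 'a::euclidean_space"
  assumes f: "\<And>k. integrable (lebesgue_on {a..b}) (f k)" and h: "integrable (lebesgue_on {a..b}) h"
    and ab: "a \<le> b"
    and unif: "\<And>\<delta>. 0 < \<delta> \<Longrightarrow> eventually (\<lambda>k. AE t in lebesgue_on {a..b}. norm (f k t - h t) \<le> \<delta>) sequentially"
  shows "weak_L1 {a..b} f h"
  unfolding weak_L1_def
proof (intro conjI allI impI f h)
  fix g :: "real \<Rightarrow> 'a" assume g: "Linf {a..b} g"
  obtain B where gB: "AE t in lebesgue_on {a..b}. norm (g t) \<le> B" and B: "0 \<le> B"
    using Linf_boundE[OF g] by blast
  let ?I = "integral\<^sup>L (lebesgue_on {a..b})"
  have int: "integrable (lebesgue_on {a..b}) (\<lambda>t. (f k t - h t) \<bullet> g t)" for k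
    using f h g by (intro integrable_inner_Linf Bochner_Integration.integrable_diff)
  have "(\<lambda>k. ?I (\<lambda>t. (f k t - h t) \<bullet> g t)) \<longlonglongrightarrow> 0"
  proof (rule tendsto_zero_if_scaled_le)
    show "0 \<le> B * (b - a)" using B ab by simp
    fix \<delta> :: real assume \<delta>: "0 < \<delta>"
    show "eventually (\<lambda>k. norm (?I (\<lambda>t. (f k t - h t) \<bullet> g t)) \<le> B * (b - a) * \<delta>) sequentially"
      using unif[OF \<delta>]
    proof eventually_elim
      case (elim k)
      have "AE t in lebesgue_on {a..b}. norm ((f k t - h t) \<bullet> g t) \<le> \<delta> * B"
        using elim gB
      proof eventually_elim
        case (elim t)
        then show ?case
          using Cauchy_Schwarz_ineq2[of "f k t - h t" "g t"] mult_mono[OF elim(1) elim(2)] \<delta>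
          by simp
      qed
      then have "norm (?I (\<lambda>t. (f k t - h t) \<bullet> g t)) \<le> \<delta> * B * (b - a)"
        using \<delta> B by (intro norm_integral_lebesgue_on_le[OF int ab]) auto
      then show ?case by (simp add: mult_ac)
    qed
  qed
  moreover have "?I (\<lambda>t. (f k t - h t) \<bullet> g t) = ?I (\<lambda>t. f k t \<bullet> g t) - ?I (\<lambda>t. h t \<bullet> g t)" for k
    using f h g by (simp add: inner_diff_left integrable_inner_Linf)
  ultimately show "(\<lambda>k. ?I (\<lambda>t. f k t \<bullet> g t)) \<longlonglongrightarrow> ?I (\<lambda>t. h t \<bullet> g t)"
    by (simp add: LIM_zero_iff)
qed

lemma borel_measurable_matrix_vector_mult:
  fixes A :: "'a \<Rightarrow> real^'m^'n" and v :: "'a \<Rightarrow> real^'m"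
  assumes "A \<in> borel_measurable M" and "v \<in> borel_measurable M"
  shows "(\<lambda>t. A t *v v t) \<in> borel_measurable M"
  by (rule borel_measurable_continuous_Pair[OF assms])
    (auto simp: matrix_vector_mult_def intro!: continuous_intros)

lemma integrable_matrix_vector_mult_Linf:
  fixes G :: "real \<Rightarrow> real^'m^'n" and v :: "real \<Rightarrow> real^'m"
  assumes G: "Linf S G" and v: "integrable (lebesgue_on S) v"
  shows "integrable (lebesgue_on S) (\<lambda>t. G t *v v t)"
proof -
  obtain B where Gm: "G \<in> borel_measurable (lebesgue_on S)"
    and GB: "AE t in lebesgue_on S. norm (G t) \<le> B" and B: "0 \<le> B"
    using Linf_boundE[OF G] by blast
  show ?thesis
  proof (rule Bochner_Integration.integrable_bound)
    show "integrable (lebesgue_on S) (\<lambda>t. B * norm (v t))"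
      using v by (intro integrable_mult_right integrable_norm)
    show "(\<lambda>t. G t *v v t) \<in> borel_measurable (lebesgue_on S)"
      using v Gm by (intro borel_measurable_matrix_vector_mult) auto
    show "AE t in lebesgue_on S. norm (G t *v v t) \<le> norm (B * norm (v t))"
      using GB
    proof eventually_elim
      case (elim t)
      then show ?case
        using norm_matrix_vector_mult_le[of "G t" "v t"] mult_right_mono[OF elim norm_ge_zero[of "v t"]] B
        by simp
    qed
  qed
qed

lemma Linf_transpose_mult:
  fixes G :: "real \<Rightarrow> real^'m^'n" and g :: "real \<Rightarrow> real^'n"
  assumes G: "Linf S G" and g: "Linf S g"
  shows "Linf S (\<lambda>t. transpose (G t) *v g t)"
proof -
  obtain B where Gm: "G \<in> borel_measurable (lebesgue_on S)"
    and GB: "AE t in lebesgue_on S. norm (G t) \<le> B" and B: "0 \<le> B"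
    using Linf_boundE[OF G] by blast
  obtain Bg where gm: "g \<in> borel_measurable (lebesgue_on S)"
    and gB: "AE t in lebesgue_on S. norm (g t) \<le> Bg"
    using Linf_boundE[OF g] by blast
  have "(\<lambda>t. transpose (G t)) \<in> borel_measurable (lebesgue_on S)"
    by (rule borel_measurable_continuous_on[OF _ Gm]) (auto simp: transpose_def intro!: continuous_intros)
  then have "(\<lambda>t. transpose (G t) *v g t) \<in> borel_measurable (lebesgue_on S)"
    using gm by (rule borel_measurable_matrix_vector_mult)
  moreover have "AE t in lebesgue_on S. norm (transpose (G t) *v g t) \<le> B * Bg"
    using GB gB
  proof eventually_elim
    case (elim t)
    then show ?case
      using norm_matrix_vector_mult_le[of "transpose (G t)" "g t"] mult_mono[OF elim] B
      by (simp add: norm_transpose)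
  qed
  ultimately show ?thesis unfolding Linf_def by blast
qed

lemma weak_L1_matrix_mult:
  fixes G :: "real \<Rightarrow> real^'m^'n" and f :: "nat \<Rightarrow> real \<Rightarrow> real^'m"
  assumes f: "weak_L1 S f h" and G: "Linf S G"
  shows "weak_L1 S (\<lambda>k t. G t *v f k t) (\<lambda>t. G t *v h t)"
proof -
  have transfer: "(A *v v) \<bullet> w = v \<bullet> (transpose A *v w)" for A :: "real^'m^'n" and v w
    by (metis dot_lmul_matrix inner_commute transpose_matrix_vector)
  show ?thesis
    using f integrable_matrix_vector_mult_Linf[OF G] Linf_transpose_mult[OF G]
    unfolding weak_L1_def transfer by blast
qed

lemma weak_L1_integral_tendsto:
  fixes f :: "nat \<Rightarrow> real \<Rightarrow> 'a::euclidean_space"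
  assumes f: "weak_L1 {a..b} f h" and t: "t \<in> {a..b}"
  shows "(\<lambda>k. integral {a..t} (f k)) \<longlonglongrightarrow> integral {a..t} h"
proof (subst tendsto_componentwise_iff, intro ballI)
  fix i :: 'a assume i: "i \<in> Basis"
  have restrict: "integral\<^sup>L (lebesgue_on {a..b}) (\<lambda>r. v r \<bullet> (indicator {a..t} r *\<^sub>R i)) = integral {a..t} v \<bullet> i"
    if v: "integrable (lebesgue_on {a..b}) v" for v :: "real \<Rightarrow> 'a"
  proof -
    have vt: "integrable (lebesgue_on {a..t}) v"
      by (rule integrable_subinterval[OF v]) (use t in auto)
    have "integral\<^sup>L (lebesgue_on {a..b}) (\<lambda>r. v r \<bullet> (indicator {a..t} r *\<^sub>R i))
        = integral\<^sup>L (lebesgue_on {a..b}) (\<lambda>r. if r \<in> {a..t} then v r \<bullet> i else 0)"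
      by (intro Bochner_Integration.integral_cong) (auto simp: indicator_def)
    also have "\<dots> = integral\<^sup>L (lebesgue_on {a..t}) (\<lambda>r. v r \<bullet> i)"
      by (rule Lebesgue_Measure.integral_restrict) (use t in auto)
    also have "\<dots> = integral {a..t} (\<lambda>r. v r \<bullet> i)"
      by (rule lebesgue_integral_eq_integral) (use vt in auto)
    also have "\<dots> = integral {a..t} v \<bullet> i"
      using integrable_on_lebesgue_on[OF vt] by simp
    finally show ?thesis .
  qed
  have test: "Linf {a..b} (\<lambda>r. indicator {a..t} r *\<^sub>R i)"
    unfolding Linf_def
  proof
    show "(\<lambda>r. indicator {a..t} r *\<^sub>R i) \<in> borel_measurable (lebesgue_on {a..b})"
      using t by (intro borel_measurable_scaleR borel_measurable_indicator) (auto simp: sets_restrict_space_iff)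
    show "\<exists>B. AE r in lebesgue_on {a..b}. norm (indicator {a..t} r *\<^sub>R i) \<le> B"
      by (intro exI[of _ "norm i"] AE_I2) (simp add: indicator_def)
  qed
  have int: "integrable (lebesgue_on {a..b}) (f k)" "integrable (lebesgue_on {a..b}) h" for k
    using f by (auto simp: weak_L1_def)
  have "(\<lambda>k. integral\<^sup>L (lebesgue_on {a..b}) (\<lambda>r. f k r \<bullet> (indicator {a..t} r *\<^sub>R i)))
      \<longlonglongrightarrow> integral\<^sup>L (lebesgue_on {a..b}) (\<lambda>r. h r \<bullet> (indicator {a..t} r *\<^sub>R i))"
    using f test unfolding weak_L1_def by blast
  then show "(\<lambda>k. integral {a..t} (f k) \<bullet> i) \<longlonglongrightarrow> integral {a..t} h \<bullet> i"
    unfolding restrict[OF int(1)] restrict[OF int(2)] .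
qed

lemma weak_W11_of_weak_L1:
  fixes f :: "nat \<Rightarrow> real \<Rightarrow> 'a::euclidean_space"
  assumes f: "weak_L1 S f h"
    and df: "weak_L1 S (\<lambda>k t. vector_derivative (f k) (at t)) (\<lambda>t. vector_derivative h (at t))"
  shows "weak_W11 S f h"
  unfolding weak_W11_def
proof (intro allI impI)
  fix g0 g1 :: "real \<Rightarrow> 'a" assume g: "Linf S g0" "Linf S g1"
  let ?I = "integral\<^sup>L (lebesgue_on S)"
  let ?f' = "\<lambda>k t. vector_derivative (f k) (at t)" and ?h' = "\<lambda>t. vector_derivative h (at t)"
  have "(\<lambda>k. ?I (\<lambda>t. f k t \<bullet> g0 t) + ?I (\<lambda>t. ?f' k t \<bullet> g1 t))
      \<longlonglongrightarrow> ?I (\<lambda>t. h t \<bullet> g0 t) + ?I (\<lambda>t. ?h' t \<bullet> g1 t)"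
    using f df g(1) g(2) unfolding weak_L1_def by (intro tendsto_add) simp_all
  moreover have "integrable (lebesgue_on S) (\<lambda>t. f k t \<bullet> g0 t)"
    "integrable (lebesgue_on S) (\<lambda>t. ?f' k t \<bullet> g1 t)"
    "integrable (lebesgue_on S) (\<lambda>t. h t \<bullet> g0 t)"
    "integrable (lebesgue_on S) (\<lambda>t. ?h' t \<bullet> g1 t)" for k
    using f df unfolding weak_L1_def
    by (simp_all add: integrable_inner_Linf[OF _ g(1)] integrable_inner_Linf[OF _ g(2)])
  ultimately show "(\<lambda>k. ?I (\<lambda>t. f k t \<bullet> g0 t + ?f' k t \<bullet> g1 t))
      \<longlonglongrightarrow> ?I (\<lambda>t. h t \<bullet> g0 t + ?h' t \<bullet> g1 t)"
    by simp
qed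

section \<open>Convergence of the smoothed solutions\<close>

locale lie_limit =
  fixes T \<tau> :: real
    and F0 :: "real^'n \<Rightarrow> real^'n \<Rightarrow> real^'n"
    and F1 :: "real^'n \<Rightarrow> real^'n \<Rightarrow> real^'m^'n"
    and \<phi> :: "real \<Rightarrow> real^'n"
    and us :: "nat \<Rightarrow> real \<Rightarrow> real^'m" and u :: "real \<Rightarrow> real^'m"
    and xs :: "nat \<Rightarrow> real \<Rightarrow> real^'n" and x :: "real \<Rightarrow> real^'n"
    and L0 L1 Cu :: real
  assumes T_pos: "0 < T" and tau_pos: "0 < \<tau>"
    and F0_lipschitz: "L0-lipschitz_on UNIV (\<lambda>p. F0 (fst p) (snd p))"
    and F1_lipschitz: "L1-lipschitz_on UNIV (\<lambda>p. F1 (fst p) (snd p))"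
    and Cu_nonneg: "0 \<le> Cu"
    and us_bound: "\<And>k. AE t in lebesgue_on {0..T}. norm (us k t) \<le> Cu"
    and us_weak_L1: "weak_L1 {0..T} us u"
    and xs_solution: "\<And>k. is_solution \<tau> T \<phi>
      (\<lambda>t. F0 (xs k t) (LIE (real (Suc k)) \<tau> (xs k) t)
        + F1 (xs k t) (LIE (real (Suc k)) \<tau> (xs k) t) *v us k t) (xs k)"
    and x_solution: "is_solution \<tau> T \<phi>
      (\<lambda>t. F0 (x t) (maxhist \<tau> x t) + F1 (x t) (maxhist \<tau> x t) *v u t) x"
begin

definition "delay k t = LIE (real (Suc k)) \<tau> (xs k) t"
definition "rhs k t = F0 (xs k t) (delay k t) + F1 (xs k t) (delay k t) *v us k t"
definition "gain t = F1 (x t) (maxhist \<tau> x t)"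
definition "rhs_lim t = F0 (x t) (maxhist \<tau> x t) + gain t *v u t"

definition "K = L0 + Cu * L1"

lemma xs_is_solution: "is_solution \<tau> T \<phi> (rhs k) (xs k)"
  using xs_solution unfolding rhs_def delay_def .

lemma x_is_solution: "is_solution \<tau> T \<phi> rhs_lim x"
  using x_solution unfolding rhs_lim_def gain_def .

lemma xs_continuous: "continuous_on {-\<tau>..T} (xs k)"
  and x_continuous: "continuous_on {-\<tau>..T} x"
  and xs_eq_x_history: "t \<in> {-\<tau>..0} \<Longrightarrow> xs k t = x t"
  using xs_is_solution[of k] x_is_solution unfolding is_solution_def by auto

lemma K_nonneg: "0 \<le> K"
  using lipschitz_on_nonneg[OF F0_lipschitz] lipschitz_on_nonneg[OF F1_lipschitz] Cu_nonneg
  by (simp add: K_def)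

lemma rhs_diff_le:
  assumes "norm w \<le> Cu"
  shows "norm ((F0 y v + F1 y v *v w) - (F0 y' v' + F1 y' v' *v w)) \<le> K * (norm (y - y') + norm (v - v'))"
proof -
  have "norm ((F1 y v - F1 y' v') *v w) \<le> L1 * (norm (y - y') + norm (v - v')) * Cu"
    using norm_matrix_vector_mult_le[of "F1 y v - F1 y' v'" w] assms
      lipschitz_on_pair_diff_le[OF F1_lipschitz, of y v y' v']
    by (smt (verit) mult_mono norm_ge_zero)
  moreover have "norm (F0 y v - F0 y' v') \<le> L0 * (norm (y - y') + norm (v - v'))"
    by (rule lipschitz_on_pair_diff_le[OF F0_lipschitz])
  moreover have "(F0 y v + F1 y v *v w) - (F0 y' v' + F1 y' v' *v w)
      = (F0 y v - F0 y' v') + (F1 y v - F1 y' v') *v w"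
    by (simp add: matrix_vector_mult_diff_rdistrib algebra_simps)
  ultimately show ?thesis
    unfolding K_def using norm_triangle_ineq[of "F0 y v - F0 y' v'" "(F1 y v - F1 y' v') *v w"]
    by (simp add: algebra_simps)
qed

lemma us_bound_on:
  assumes "0 \<le> s" "t \<le> T"
  shows "AE r in lebesgue_on {s..t}. norm (us k r) \<le> Cu"
  by (rule AE_lebesgue_on_subset[OF us_bound]) (use assms in auto)

lemma xs_diff_le:
  assumes st: "0 \<le> s" "s \<le> t" "t \<le> T" and "0 \<le> B"
    and B: "\<And>r. r \<in> {s..t} \<Longrightarrow> norm (us k r) \<le> Cu \<Longrightarrow> norm (rhs k r) \<le> B"
  shows "norm (xs k t - xs k s) \<le> B * (t - s)"
proof (rule has_integral_bound_AE[OF is_solution_has_integral[OF xs_is_solution st] st(2) assms(4)])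
  have "AE r in lebesgue_on {s..t}. r \<in> {s..t}" by (rule AE_I2) simp
  with us_bound_on[OF st(1,3), of k] show "AE r in lebesgue_on {s..t}. norm (rhs k r) \<le> B"
    by eventually_elim (rule B)
qed

lemma norm_delay_le:
  assumes t: "t \<in> {0..T}" and B: "\<And>s. s \<in> {t - \<tau>..t} \<Longrightarrow> norm (xs k s) \<le> B"
  shows "norm (delay k t) \<le> real CARD('n) * (B + \<bar>ln \<tau>\<bar>)"
  unfolding delay_def
  by (rule norm_LIE_le[OF continuous_on_subset[OF xs_continuous] tau_pos _ B]) (use t in auto)

lemma rhs_growth:
  assumes "norm (us k t) \<le> Cu"
  shows "norm (rhs k t) \<le> norm (F0 0 0) + Cu * norm (F1 0 0) + K * (norm (xs k t) + norm (delay k t))"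
proof -
  have "norm (F0 0 0 + F1 0 0 *v us k t) \<le> norm (F0 0 0) + Cu * norm (F1 0 0)"
    using norm_triangle_ineq[of "F0 0 0" "F1 0 0 *v us k t"] norm_matrix_vector_mult_le[of "F1 0 0" "us k t"]
      mult_left_mono[OF assms norm_ge_zero[of "F1 0 0"]] by (simp add: mult.commute)
  moreover have "norm (rhs k t - (F0 0 0 + F1 0 0 *v us k t)) \<le> K * (norm (xs k t) + norm (delay k t))"
    using rhs_diff_le[OF assms, of "xs k t" "delay k t" 0 0] by (simp add: rhs_def)
  ultimately show ?thesis
    using norm_triangle_sub[of "rhs k t" "F0 0 0 + F1 0 0 *v us k t"] by linarith
qed

definition "growth0 = norm (F0 0 0) + Cu * norm (F1 0 0) + K * real CARD('n) * \<bar>ln \<tau>\<bar>"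
definition "growth1 = K * (1 + real CARD('n))"

lemma growth_nonneg: "0 \<le> growth0" "0 \<le> growth1"
  using K_nonneg Cu_nonneg by (simp_all add: growth0_def growth1_def)

lemma rhs_le_growth:
  assumes t: "t \<in> {0..T}" and "norm (us k t) \<le> Cu" and B: "\<And>s. s \<in> {-\<tau>..t} \<Longrightarrow> norm (xs k s) \<le> B"
  shows "norm (rhs k t) \<le> growth0 + growth1 * B"
proof -
  have "norm (xs k t) \<le> B" using B t tau_pos by simp
  moreover have "norm (delay k t) \<le> real CARD('n) * (B + \<bar>ln \<tau>\<bar>)"
    using B t by (intro norm_delay_le) auto
  ultimately have "K * (norm (xs k t) + norm (delay k t)) \<le> K * (B + real CARD('n) * (B + \<bar>ln \<tau>\<bar>))"
    using K_nonneg by (intro mult_left_mono) auto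
  then show ?thesis
    using rhs_growth[OF assms(2)] by (simp add: growth0_def growth1_def algebra_simps)
qed

definition "xs_sup k t = running_sup (\<lambda>s. norm (xs k s)) (-\<tau>) t"

lemma norm_xs_le_xs_sup: "t \<in> {0..T} \<Longrightarrow> s \<in> {-\<tau>..t} \<Longrightarrow> norm (xs k s) \<le> xs_sup k t"
  unfolding xs_sup_def
  by (rule running_sup_upper) (auto intro!: continuous_intros continuous_on_subset[OF xs_continuous])

lemma xs_sup_nonneg: "t \<in> {0..T} \<Longrightarrow> 0 \<le> xs_sup k t"
  using norm_xs_le_xs_sup[of t t k] tau_pos by (smt (verit) atLeastAtMost_iff norm_ge_zero)

lemma xs_sup_step:
  assumes st: "0 \<le> s" "s \<le> t" "t \<le> T"
  shows "xs_sup k t \<le> xs_sup k s + (t - s) * (growth0 + growth1 * xs_sup k t)"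
proof -
  let ?B = "growth0 + growth1 * xs_sup k t"
  have B: "0 \<le> ?B" using growth_nonneg xs_sup_nonneg[of t k] st by simp
  have "running_sup (\<lambda>s. norm (xs k s)) (-\<tau>) t \<le> running_sup (\<lambda>s. norm (xs k s)) (-\<tau>) s + (t - s) * ?B"
  proof (rule running_sup_step)
    fix r assume r: "r \<in> {s..t}"
    have "norm (xs k r - xs k s) \<le> ?B * (r - s)"
      using r st B by (intro xs_diff_le rhs_le_growth norm_xs_le_xs_sup) auto
    also have "\<dots> \<le> ?B * (t - s)" using r B by (intro mult_left_mono) auto
    finally show "norm (xs k r) \<le> norm (xs k s) + (t - s) * ?B"
      using norm_triangle_sub[of "xs k r" "xs k s"] by (simp add: mult.commute)
  qed (use st tau_pos B in \<open>auto intro!: continuous_intros continuous_on_subset[OF xs_continuous]\<close>)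
  then show ?thesis unfolding xs_sup_def .
qed

lemma xs_bounded:
  obtains R where "0 \<le> R" "\<And>k t. t \<in> {-\<tau>..T} \<Longrightarrow> norm (xs k t) \<le> R"
proof -
  have xs_sup_0: "xs_sup k 0 = xs_sup 0 0" for k
    unfolding xs_sup_def running_sup_def using xs_eq_x_history by (intro arg_cong[where f = Sup] image_cong) auto
  define R where "R = (xs_sup 0 0 + 2 * (T * growth0)) * gronwall_factor growth1 T"
  have "xs_sup k T \<le> R" for k
  proof -
    have "xs_sup k T \<le> (xs_sup k 0 + 2 * (T * growth0)) * gronwall_factor growth1 T"
    proof (rule gronwall_step_bound)
      fix s t assume st: "0 \<le> s" "s \<le> t" "t \<le> T"
      have "(t - s) * growth0 \<le> T * growth0" using st growth_nonneg by (intro mult_right_mono) auto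
      then show "xs_sup k t \<le> xs_sup k s + T * growth0 + (t - s) * growth1 * xs_sup k t"
        using xs_sup_step[OF st, of k] by (simp add: algebra_simps)
    qed (use T_pos growth_nonneg xs_sup_nonneg in auto)
    then show ?thesis unfolding R_def xs_sup_0[of k] .
  qed
  show thesis
  proof (rule that)
    show "0 \<le> R" using xs_sup_nonneg[of T 0] \<open>xs_sup 0 T \<le> R\<close> T_pos by simp
    show "norm (xs k t) \<le> R" if "t \<in> {-\<tau>..T}" for k t
      using norm_xs_le_xs_sup[of T t k] \<open>xs_sup k T \<le> R\<close> that T_pos by simp
  qed
qed

lemma xs_lipschitz:
  obtains \<Lambda> where "\<And>k. \<Lambda>-lipschitz_on {0..T} (xs k)"
proof -
  obtain R where R: "0 \<le> R" "\<And>k t. t \<in> {-\<tau>..T} \<Longrightarrow> norm (xs k t) \<le> R"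
    using xs_bounded by blast
  let ?\<Lambda> = "growth0 + growth1 * R"
  have \<Lambda>: "0 \<le> ?\<Lambda>" using growth_nonneg R(1) by simp
  have ordered: "norm (xs k t - xs k s) \<le> ?\<Lambda> * (t - s)" if "s \<in> {0..T}" "t \<in> {0..T}" "s \<le> t" for k s t
    using that \<Lambda> by (intro xs_diff_le rhs_le_growth R(2)) auto
  have "dist (xs k s) (xs k t) \<le> ?\<Lambda> * dist s t" if "s \<in> {0..T}" "t \<in> {0..T}" for k s t
    using that ordered[of s t k] ordered[of t s k]
    by (cases "s \<le> t") (auto simp: dist_norm dist_real_def norm_minus_commute)
  then have "?\<Lambda>-lipschitz_on {0..T} (xs k)" for k
    using \<Lambda> by (intro lipschitz_onI)
  then show thesis by (rule that)
qed

lemma xs_equicontinuous: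
  assumes "0 < \<delta>"
  obtains \<eta> where "0 < \<eta>"
    "\<And>k s s'. s \<in> {-\<tau>..T} \<Longrightarrow> s' \<in> {-\<tau>..T} \<Longrightarrow> \<bar>s - s'\<bar> \<le> \<eta> \<Longrightarrow> norm (xs k s - xs k s') \<le> \<delta>"
proof -
  obtain \<Lambda> where \<Lambda>: "\<And>k. \<Lambda>-lipschitz_on {0..T} (xs k)" using xs_lipschitz by blast
  obtain \<eta>0 where \<eta>0: "0 < \<eta>0"
    "\<And>s s'. s \<in> {-\<tau>..T} \<Longrightarrow> s' \<in> {-\<tau>..T} \<Longrightarrow> dist s' s < \<eta>0 \<Longrightarrow> dist (x s') (x s) < \<delta> / 2"
    using compact_uniformly_continuous[OF x_continuous compact_Icc] assms
    unfolding uniformly_continuous_on_def by (metis half_gt_zero)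
  define \<eta> where "\<eta> = min (\<eta>0 / 2) (\<delta> / (2 * (\<Lambda> + 1)))"
  have L0: "0 \<le> \<Lambda>" using lipschitz_on_nonneg[OF \<Lambda>] .
  have \<eta>: "0 < \<eta>" "\<eta> < \<eta>0" using \<eta>0 assms L0 by (auto simp: \<eta>_def)
  have "norm (xs k s - xs k s') \<le> 2 * (\<delta> / 2)"
    if "s \<in> {-\<tau>..T}" "s' \<in> {-\<tau>..T}" "\<bar>s - s'\<bar> \<le> \<eta>" for k s s'
  proof (rule norm_diff_le_glue[OF _ _ that])
    fix s s' assume s: "s \<in> {-\<tau>..0}" "s' \<in> {-\<tau>..0}" "\<bar>s - s'\<bar> \<le> \<eta>"
    have "dist (x s) (x s') < \<delta> / 2"
      using s \<eta> T_pos by (intro \<eta>0(2)) (auto simp: dist_real_def)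
    then show "norm (xs k s - xs k s') \<le> \<delta> / 2"
      by (simp add: xs_eq_x_history[OF s(1)] xs_eq_x_history[OF s(2)] dist_norm)
  next
    fix s s' assume s: "s \<in> {0..T}" "s' \<in> {0..T}" "\<bar>s - s'\<bar> \<le> \<eta>"
    have "norm (xs k s - xs k s') \<le> \<Lambda> * \<bar>s - s'\<bar>"
      using lipschitz_onD[OF \<Lambda> s(1,2)] by (simp add: dist_norm dist_real_def)
    also have "\<dots> \<le> (\<Lambda> + 1) * (\<delta> / (2 * (\<Lambda> + 1)))"
      using s(3) L0 by (intro mult_mono) (auto simp: \<eta>_def)
    also have "\<dots> = \<delta> / 2" using L0 by (simp add: field_simps)
    finally show "norm (xs k s - xs k s') \<le> \<delta> / 2" .
  qed
  then show thesis using that[OF \<eta>(1)] by simp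
qed

lemma delay_uniform_limit:
  "uniform_limit {0..T} (\<lambda>k t. delay k t - maxhist \<tau> (xs k) t) (\<lambda>_. 0) sequentially"
proof (rule uniform_limit_if_scaled_le[of "2 * real CARD('n)"])
  fix \<delta> :: real assume \<delta>: "0 < \<delta>"
  obtain \<eta>0 where \<eta>0: "0 < \<eta>0" and osc: "\<And>k s s'. s \<in> {-\<tau>..T} \<Longrightarrow> s' \<in> {-\<tau>..T} \<Longrightarrow>
      \<bar>s - s'\<bar> \<le> \<eta>0 \<Longrightarrow> norm (xs k s - xs k s') \<le> \<delta>"
    using xs_equicontinuous[OF \<delta>] by blast
  define \<eta> where "\<eta> = min \<eta>0 \<tau>"
  have \<eta>: "0 < \<eta>" "\<eta> \<le> \<tau>" "\<eta> \<le> \<eta>0" using \<eta>0 tau_pos by (auto simp: \<eta>_def)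
  let ?c = "\<bar>ln \<eta>\<bar> + \<bar>ln \<tau>\<bar>"
  have "(\<lambda>k. ?c / real (Suc k)) \<longlonglongrightarrow> 0"
    using LIMSEQ_Suc[OF lim_const_over_n[of ?c]] by simp
  then have "eventually (\<lambda>k. ?c / real (Suc k) < \<delta>) sequentially"
    using \<delta> by (rule order_tendstoD)
  then show "eventually (\<lambda>k. \<forall>t\<in>{0..T}.
      dist (delay k t - maxhist \<tau> (xs k) t) 0 \<le> 2 * real CARD('n) * \<delta>) sequentially"
  proof (rule eventually_mono, intro ballI)
    fix k t assume k: "?c / real (Suc k) < \<delta>" and t: "t \<in> {0..T}"
    have "norm (delay k t - maxhist \<tau> (xs k) t) \<le> real CARD('n) * (\<delta> + ?c / real (Suc k))"
      unfolding delay_def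
    proof (rule norm_LIE_minus_maxhist_le[OF _ _ \<eta>(1,2)])
      show "continuous_on {t - \<tau>..t} (xs k)"
        using t by (intro continuous_on_subset[OF xs_continuous]) auto
      show "norm (xs k s - xs k s') \<le> \<delta>"
        if "s \<in> {t - \<tau>..t}" "s' \<in> {t - \<tau>..t}" "\<bar>s - s'\<bar> \<le> \<eta>" for s s'
        using that t \<eta> by (intro osc) auto
    qed simp
    also have "\<dots> \<le> real CARD('n) * (\<delta> + \<delta>)"
      using k by (intro mult_left_mono) auto
    finally show "dist (delay k t - maxhist \<tau> (xs k) t) 0 \<le> 2 * real CARD('n) * \<delta>"
      by (simp add: algebra_simps)
  qed
qed simp

lemma gain_continuous: "continuous_on {0..T} gain"
proof -
  have "continuous_on {0..T} (\<lambda>t. (\<lambda>p. F1 (fst p) (snd p)) (x t, maxhist \<tau> x t))"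
    using continuous_on_subset[OF x_continuous] tau_pos
    by (intro continuous_on_compose2[OF lipschitz_on_continuous_on[OF F1_lipschitz]]
        continuous_intros continuous_on_maxhist) (auto simp: x_continuous)
  then show ?thesis by (simp add: gain_def)
qed

lemma gain_bounded:
  obtains B where "0 \<le> B" "\<And>t. t \<in> {0..T} \<Longrightarrow> norm (gain t) \<le> B"
proof -
  obtain B where "\<forall>t\<in>{0..T}. norm (gain t) \<le> B"
    using compact_imp_bounded[OF compact_continuous_image[OF gain_continuous compact_Icc]]
    unfolding bounded_iff by auto
  then show thesis using that[of B] T_pos by (smt (verit) atLeastAtMost_iff norm_ge_zero)
qed

lemma gain_Linf: "Linf {0..T} gain"
proof -
  obtain B where B: "\<And>t. t \<in> {0..T} \<Longrightarrow> norm (gain t) \<le> B" using gain_bounded by blast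
  show ?thesis
    unfolding Linf_def
  proof
    show "gain \<in> borel_measurable (lebesgue_on {0..T})"
      by (rule continuous_imp_measurable_on_sets_lebesgue[OF gain_continuous]) simp
    show "\<exists>B. AE t in lebesgue_on {0..T}. norm (gain t) \<le> B"
      using B by (intro exI[of _ B] AE_I2) auto
  qed
qed

lemma gain_us_weak_L1: "weak_L1 {0..T} (\<lambda>k t. gain t *v us k t) (\<lambda>t. gain t *v u t)"
  by (rule weak_L1_matrix_mult[OF us_weak_L1 gain_Linf])

definition "control k t = integral {0..t} (\<lambda>r. gain r *v us k r)"
definition "control_lim t = integral {0..t} (\<lambda>r. gain r *v u r)"

lemma gain_us_integrable_on: "(\<lambda>r. gain r *v us k r) integrable_on {0..T}"
  and gain_u_integrable_on: "(\<lambda>r. gain r *v u r) integrable_on {0..T}"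
  using gain_us_weak_L1 unfolding weak_L1_def by (auto intro: integrable_on_lebesgue_on)

lemma control_uniform_limit: "uniform_limit {0..T} control control_lim sequentially"
proof -
  obtain B where B: "0 \<le> B" "\<And>t. t \<in> {0..T} \<Longrightarrow> norm (gain t) \<le> B" using gain_bounded by blast
  show ?thesis
    unfolding control_def control_lim_def
  proof (rule uniform_limit_equi_lipschitz)
    show "(\<lambda>k. integral {0..t} (\<lambda>r. gain r *v us k r)) \<longlonglongrightarrow> integral {0..t} (\<lambda>r. gain r *v u r)"
      if "t \<in> {0..T}" for t
      by (rule weak_L1_integral_tendsto[OF gain_us_weak_L1 that])
    show "continuous_on {0..T} (\<lambda>t. integral {0..t} (\<lambda>r. gain r *v u r))"
      by (rule indefinite_integral_continuous_1[OF gain_u_integrable_on])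
    fix k s t assume st: "s \<in> {0..T}" "t \<in> {0..T}" "s \<le> t"
    have "AE r in lebesgue_on {s..t}. norm (gain r *v us k r) \<le> B * Cu"
    proof -
      have "AE r in lebesgue_on {s..t}. norm (us k r) \<le> Cu" using st by (intro us_bound_on) auto
      moreover have "AE r in lebesgue_on {s..t}. r \<in> {s..t}" by (rule AE_I2) simp
      ultimately show ?thesis
      proof eventually_elim
        case (elim r)
        then show ?case
          using norm_matrix_vector_mult_le[of "gain r" "us k r"] B mult_mono[OF B(2) elim(1)] st
          by (smt (verit) atLeastAtMost_iff norm_ge_zero)
      qed
    qed
    then show "norm (integral {0..t} (\<lambda>r. gain r *v us k r) - integral {0..s} (\<lambda>r. gain r *v us k r))
        \<le> B * Cu * (t - s)"
      using st B Cu_nonneg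
      by (intro has_integral_bound_AE[OF has_integral_integral_diff[OF gain_us_integrable_on]]) auto
  qed
qed

(* The control difference is taken out of the integrand: u_k - u tends to 0 only weakly, but its
   primitive against the continuous gain tends to 0 uniformly (control_uniform_limit). *)
definition "defect k t = rhs k t - rhs_lim t - gain t *v (us k t - u t)"

lemma norm_defect_le:
  assumes t: "t \<in> {0..T}" and "norm (us k t) \<le> Cu"
    and B: "\<And>s. s \<in> {-\<tau>..t} \<Longrightarrow> norm (xs k s - x s) \<le> B"
  shows "norm (defect k t) \<le> K * ((1 + real CARD('n)) * B + norm (delay k t - maxhist \<tau> (xs k) t))"
proof -
  have "defect k t = (F0 (xs k t) (delay k t) + F1 (xs k t) (delay k t) *v us k t)
      - (F0 (x t) (maxhist \<tau> x t) + F1 (x t) (maxhist \<tau> x t) *v us k t)"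
    by (simp add: defect_def rhs_def rhs_lim_def gain_def matrix_vector_mult_diff_distrib)
  then have "norm (defect k t) \<le> K * (norm (xs k t - x t) + norm (delay k t - maxhist \<tau> x t))"
    using rhs_diff_le[OF assms(2)] by simp
  moreover have "norm (xs k t - x t) \<le> B" using B t tau_pos by simp
  moreover have "norm (maxhist \<tau> (xs k) t - maxhist \<tau> x t) \<le> real CARD('n) * B"
    using t B by (intro norm_maxhist_diff_le continuous_on_subset[OF xs_continuous]
        continuous_on_subset[OF x_continuous]) (use tau_pos in auto)
  moreover have "norm (delay k t - maxhist \<tau> x t)
      \<le> norm (delay k t - maxhist \<tau> (xs k) t) + norm (maxhist \<tau> (xs k) t - maxhist \<tau> x t)"
    using norm_triangle_ineq[of "delay k t - maxhist \<tau> (xs k) t" "maxhist \<tau> (xs k) t - maxhist \<tau> x t"]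
    by simp
  ultimately have "norm (xs k t - x t) + norm (delay k t - maxhist \<tau> x t)
      \<le> (1 + real CARD('n)) * B + norm (delay k t - maxhist \<tau> (xs k) t)"
    by (simp add: algebra_simps)
  then show ?thesis
    using order_trans[OF \<open>norm (defect k t) \<le> _\<close> mult_left_mono[OF _ K_nonneg]] by blast
qed

lemma defect_has_integral:
  assumes st: "0 \<le> s" "s \<le> t" "t \<le> T"
  shows "(defect k has_integral
    ((xs k t - x t) - (xs k s - x s) - ((control k t - control_lim t) - (control k s - control_lim s)))) {s..t}"
proof -
  have "((\<lambda>r. rhs k r - rhs_lim r - (gain r *v us k r - gain r *v u r)) has_integral
      ((xs k t - xs k s) - (x t - x s) - ((control k t - control k s) - (control_lim t - control_lim s)))) {s..t}"
    unfolding control_def control_lim_def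
    by (intro has_integral_diff is_solution_has_integral[OF xs_is_solution st]
        is_solution_has_integral[OF x_is_solution st]
        has_integral_integral_diff[OF gain_us_integrable_on] has_integral_integral_diff[OF gain_u_integrable_on])
      (use st in auto)
  moreover have "(\<lambda>r. rhs k r - rhs_lim r - (gain r *v us k r - gain r *v u r)) = defect k"
    by (simp add: fun_eq_iff defect_def matrix_vector_mult_diff_distrib)
  moreover have "(xs k t - xs k s) - (x t - x s) - ((control k t - control k s) - (control_lim t - control_lim s))
      = (xs k t - x t) - (xs k s - x s) - ((control k t - control_lim t) - (control k s - control_lim s))"
    by (simp add: algebra_simps)
  ultimately show ?thesis by (simp only:)
qed

lemma defect_AE_le:
  assumes ab: "0 \<le> a" "b \<le> T"
    and B: "\<And>s. s \<in> {-\<tau>..b} \<Longrightarrow> norm (xs k s - x s) \<le> B"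
    and \<epsilon>: "\<And>t. t \<in> {a..b} \<Longrightarrow> norm (delay k t - maxhist \<tau> (xs k) t) \<le> \<epsilon>"
  shows "AE t in lebesgue_on {a..b}. norm (defect k t) \<le> K * ((1 + real CARD('n)) * B + \<epsilon>)"
proof -
  have "AE t in lebesgue_on {a..b}. norm (us k t) \<le> Cu" using ab by (rule us_bound_on)
  moreover have "AE t in lebesgue_on {a..b}. t \<in> {a..b}" by (rule AE_I2) simp
  ultimately show ?thesis
  proof eventually_elim
    case (elim t)
    have "norm (defect k t) \<le> K * ((1 + real CARD('n)) * B + norm (delay k t - maxhist \<tau> (xs k) t))"
      using elim ab B by (intro norm_defect_le) auto
    also have "\<dots> \<le> K * ((1 + real CARD('n)) * B + \<epsilon>)"
      using \<epsilon>[OF elim(2)] K_nonneg by (intro mult_left_mono add_left_mono) auto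
    finally show ?case .
  qed
qed

lemma deviation_increment_le:
  assumes st: "0 \<le> s" "s \<le> t" "t \<le> T" and "0 \<le> B"
    and B: "AE r in lebesgue_on {s..t}. norm (defect k r) \<le> B"
  shows "norm (xs k t - x t) \<le> norm (xs k s - x s) + norm (control k t - control_lim t)
    + norm (control k s - control_lim s) + B * (t - s)"
proof -
  have "norm ((xs k t - x t) - (xs k s - x s) - ((control k t - control_lim t) - (control k s - control_lim s)))
      \<le> B * (t - s)"
    by (rule has_integral_bound_AE[OF defect_has_integral[OF st] st(2) assms(4) B])
  moreover have "norm (xs k t - x t) \<le> norm ((xs k t - x t) - (xs k s - x s) - ((control k t - control_lim t)
      - (control k s - control_lim s))) + norm (xs k s - x s) + norm (control k t - control_lim t)
      + norm (control k s - control_lim s)"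
    by (rule norm_sum4_le) simp
  ultimately show ?thesis by linarith
qed

definition "deviation k t = running_sup (\<lambda>s. norm (xs k s - x s)) (-\<tau>) t"

lemma norm_le_deviation: "t \<in> {0..T} \<Longrightarrow> s \<in> {-\<tau>..t} \<Longrightarrow> norm (xs k s - x s) \<le> deviation k t"
  unfolding deviation_def
  by (rule running_sup_upper)
    (auto intro!: continuous_intros continuous_on_subset[OF xs_continuous] continuous_on_subset[OF x_continuous])

lemma deviation_nonneg: "t \<in> {0..T} \<Longrightarrow> 0 \<le> deviation k t"
  using norm_le_deviation[of t t k] tau_pos by (smt (verit) atLeastAtMost_iff norm_ge_zero)

lemma deviation_step:
  assumes \<epsilon>: "0 \<le> \<epsilon>" "\<And>t. t \<in> {0..T} \<Longrightarrow> norm (delay k t - maxhist \<tau> (xs k) t) \<le> \<epsilon>"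
    and E: "\<And>t. t \<in> {0..T} \<Longrightarrow> norm (control k t - control_lim t) \<le> E"
    and st: "0 \<le> s" "s \<le> t" "t \<le> T"
  shows "deviation k t \<le> deviation k s + 2 * E + (t - s) * (K * ((1 + real CARD('n)) * deviation k t + \<epsilon>))"
proof -
  let ?B = "K * ((1 + real CARD('n)) * deviation k t + \<epsilon>)"
  have B: "0 \<le> ?B" using K_nonneg deviation_nonneg[of t k] st \<epsilon>(1) by simp
  have E0: "0 \<le> E" using E[of 0] T_pos by (smt (verit) atLeastAtMost_iff norm_ge_zero)
  have "running_sup (\<lambda>s. norm (xs k s - x s)) (-\<tau>) t
      \<le> running_sup (\<lambda>s. norm (xs k s - x s)) (-\<tau>) s + (2 * E + (t - s) * ?B)"
  proof (rule running_sup_step)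
    fix r assume r: "r \<in> {s..t}"
    have "AE \<rho> in lebesgue_on {s..r}. norm (defect k \<rho>) \<le> ?B"
      using st r \<epsilon>(2) by (intro defect_AE_le norm_le_deviation) auto
    then have "norm (xs k r - x r) \<le> norm (xs k s - x s) + norm (control k r - control_lim r)
        + norm (control k s - control_lim s) + ?B * (r - s)"
      using st r B by (intro deviation_increment_le) auto
    moreover have "?B * (r - s) \<le> ?B * (t - s)" using r B by (intro mult_left_mono) auto
    ultimately show "norm (xs k r - x r) \<le> norm (xs k s - x s) + (2 * E + (t - s) * ?B)"
      using E[of r] E[of s] r st by (auto simp: mult.commute)
  qed (use st tau_pos B E0 in \<open>auto intro!: continuous_intros continuous_on_subset[OF xs_continuous]
      continuous_on_subset[OF x_continuous]\<close>)
  then show ?thesis by (simp add: deviation_def algebra_simps)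
qed

lemma deviation_bound:
  assumes \<epsilon>: "0 \<le> \<epsilon>" "\<And>t. t \<in> {0..T} \<Longrightarrow> norm (delay k t - maxhist \<tau> (xs k) t) \<le> \<epsilon>"
    and E: "\<And>t. t \<in> {0..T} \<Longrightarrow> norm (control k t - control_lim t) \<le> E"
  shows "deviation k T \<le> 2 * (2 * E + T * K * \<epsilon>) * gronwall_factor (K * (1 + real CARD('n))) T"
proof -
  have E0: "0 \<le> E" using E[of 0] T_pos by (smt (verit) atLeastAtMost_iff norm_ge_zero)
  have "deviation k 0 = 0"
    unfolding deviation_def running_sup_def using xs_eq_x_history tau_pos by (simp add: cSup_singleton)
  moreover have "deviation k T \<le> (deviation k 0 + 2 * (2 * E + T * K * \<epsilon>)) * gronwall_factor (K * (1 + real CARD('n))) T"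
  proof (rule gronwall_step_bound)
    fix s t assume st: "0 \<le> s" "s \<le> t" "t \<le> T"
    have "(t - s) * (K * \<epsilon>) \<le> T * (K * \<epsilon>)"
      using st K_nonneg \<epsilon>(1) by (intro mult_right_mono) auto
    then show "deviation k t \<le> deviation k s + (2 * E + T * K * \<epsilon>) + (t - s) * (K * (1 + real CARD('n))) * deviation k t"
      using deviation_step[OF \<epsilon> E st] by (simp add: algebra_simps)
  qed (use E0 \<epsilon>(1) K_nonneg T_pos deviation_nonneg in auto)
  ultimately show ?thesis by simp
qed

lemma xs_uniform_limit: "uniform_limit {0..T} xs x sequentially"
proof (rule uniform_limit_if_scaled_le)
  let ?M = "2 * (2 + T * K) * gronwall_factor (K * (1 + real CARD('n))) T"
  show "0 \<le> ?M"
    using T_pos K_nonneg gronwall_factor_ge_1[of "K * (1 + real CARD('n))" T] by simp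
  fix \<delta> :: real assume \<delta>: "0 < \<delta>"
  have "eventually (\<lambda>k. \<forall>t\<in>{0..T}. dist (delay k t - maxhist \<tau> (xs k) t) 0 < \<delta>) sequentially"
    "eventually (\<lambda>k. \<forall>t\<in>{0..T}. dist (control k t) (control_lim t) < \<delta>) sequentially"
    using uniform_limitD[OF delay_uniform_limit \<delta>] uniform_limitD[OF control_uniform_limit \<delta>] .
  then show "eventually (\<lambda>k. \<forall>t\<in>{0..T}. dist (xs k t) (x t) \<le> ?M * \<delta>) sequentially"
  proof eventually_elim
    case (elim k)
    have "deviation k T \<le> 2 * (2 * \<delta> + T * K * \<delta>) * gronwall_factor (K * (1 + real CARD('n))) T"
      using elim \<delta> by (intro deviation_bound) (auto simp: dist_norm less_imp_le)
    then have deviation: "deviation k T \<le> ?M * \<delta>" by (simp add: algebra_simps)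
    show ?case
    proof
      fix t assume "t \<in> {0..T}"
      then have "norm (xs k t - x t) \<le> deviation k T" using T_pos tau_pos by (intro norm_le_deviation) auto
      with deviation show "dist (xs k t) (x t) \<le> ?M * \<delta>" by (simp add: dist_norm)
    qed
  qed
qed

lemma xs_weak_L1: "weak_L1 {0..T} xs x"
proof (rule weak_L1_of_uniform_AE)
  show "integrable (lebesgue_on {0..T}) (xs k)" "integrable (lebesgue_on {0..T}) x" for k
    using tau_pos by (auto intro!: continuous_imp_integrable_real
        continuous_on_subset[OF xs_continuous] continuous_on_subset[OF x_continuous])
  fix \<delta> :: real assume "0 < \<delta>"
  from uniform_limitD[OF xs_uniform_limit this]
  show "eventually (\<lambda>k. AE t in lebesgue_on {0..T}. norm (xs k t - x t) \<le> \<delta>) sequentially"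
    by eventually_elim (auto intro!: AE_I2 simp: dist_norm less_imp_le)
qed (use T_pos in simp)

lemma derivative_weak_L1:
  "weak_L1 {0..T} (\<lambda>k t. vector_derivative (xs k) (at t)) (\<lambda>t. vector_derivative x (at t))"
proof -
  let ?v = "\<lambda>k t. vector_derivative (xs k) (at t)" and ?w = "\<lambda>t. vector_derivative x (at t)"
  let ?P = "\<lambda>k e. AE t in lebesgue_on {0..T}. norm ((?v k t - gain t *v us k t) - (?w t - gain t *v u t)) \<le> e"
  have "weak_L1 {0..T} (\<lambda>k t. ?v k t - gain t *v us k t) (\<lambda>t. ?w t - gain t *v u t)"
  proof (rule weak_L1_of_uniform_AE)
    show "integrable (lebesgue_on {0..T}) (\<lambda>t. ?v k t - gain t *v us k t)"
      "integrable (lebesgue_on {0..T}) (\<lambda>t. ?w t - gain t *v u t)" for k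
      using gain_us_weak_L1 T_pos unfolding weak_L1_def
      by (auto intro!: Bochner_Integration.integrable_diff
          is_solution_integrable_vector_derivative[OF xs_is_solution]
          is_solution_integrable_vector_derivative[OF x_is_solution])
    show "eventually (\<lambda>k. ?P k \<delta>) sequentially" if "0 < \<delta>" for \<delta>
    proof (rule eventually_le_scaled[where P = ?P, OF _ _ _ that])
      show "0 \<le> K * (2 + real CARD('n))" using K_nonneg by simp
      show "?P k b" if "?P k a" "a \<le> b" for k a b
        using that(1) by eventually_elim (use that(2) in simp)
      fix \<delta>' :: real assume \<delta>': "0 < \<delta>'"
      have "eventually (\<lambda>k. \<forall>t\<in>{0..T}. dist (xs k t) (x t) < \<delta>') sequentially"
        "eventually (\<lambda>k. \<forall>t\<in>{0..T}. dist (delay k t - maxhist \<tau> (xs k) t) 0 < \<delta>') sequentially"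
        using uniform_limitD[OF xs_uniform_limit \<delta>'] uniform_limitD[OF delay_uniform_limit \<delta>'] .
      then show "eventually (\<lambda>k. ?P k (K * (2 + real CARD('n)) * \<delta>')) sequentially"
      proof eventually_elim
        case (elim k)
        have "norm (xs k s - x s) \<le> \<delta>'" if "s \<in> {-\<tau>..T}" for s
          using that elim(1) xs_eq_x_history[of s k] \<delta>'
          by (cases "s < 0") (auto simp: dist_norm less_imp_le)
        then have "AE t in lebesgue_on {0..T}. norm (defect k t) \<le> K * ((1 + real CARD('n)) * \<delta>' + \<delta>')"
          using elim(2) by (intro defect_AE_le) (auto simp: dist_norm less_imp_le)
        with is_solution_vector_derivative_AE[OF xs_is_solution, of k]
          is_solution_vector_derivative_AE[OF x_is_solution]
        show ?case
          by eventually_elim (simp add: defect_def matrix_vector_mult_diff_distrib algebra_simps)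
      qed
    qed
  qed (use T_pos in simp)
  from weak_L1_add[OF gain_us_weak_L1 this] show ?thesis by simp
qed

lemma xs_weak_W11: "weak_W11 {0..T} xs x"
  by (rule weak_W11_of_weak_L1[OF xs_weak_L1 derivative_weak_L1])

end

theorem corollary5p2:
  fixes T \<tau> :: real
    and F0 :: "real^'n \<Rightarrow> real^'n \<Rightarrow> real^'n"
    and F1 :: "real^'n \<Rightarrow> real^'n \<Rightarrow> real^'m^'n"
    and \<phi> :: "real \<Rightarrow> real^'n"
    and us :: "nat \<Rightarrow> real \<Rightarrow> real^'m" and u :: "real \<Rightarrow> real^'m"
    and xs :: "nat \<Rightarrow> real \<Rightarrow> real^'n" and x :: "real \<Rightarrow> real^'n"
  assumes "T > 0" and "\<tau> > 0"
    and "lip_C1 (\<lambda>p::(real^'n) \<times> (real^'n). F0 (fst p) (snd p))"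
    and "lip_C1 (\<lambda>p::(real^'n) \<times> (real^'n). F1 (fst p) (snd p))"
    and "continuous_on {-\<tau>..0} \<phi>"
    and "\<forall>k. us k \<in> borel_measurable (lebesgue_on {0..T})"
    and "\<exists>C. \<forall>k. AE t in lebesgue_on {0..T}. norm (us k t) \<le> C"
    and "weak_L1 {0..T} us u"
    and "\<forall>k. is_solution \<tau> T \<phi>
           (\<lambda>t. F0 (xs k t) (LIE (real (Suc k)) \<tau> (xs k) t)
                 + F1 (xs k t) (LIE (real (Suc k)) \<tau> (xs k) t) *v us k t) (xs k)"
    and "is_solution \<tau> T \<phi> (\<lambda>t. F0 (x t) (maxhist \<tau> x t) + F1 (x t) (maxhist \<tau> x t) *v u t) x"
  shows "weak_W11 {0..T} xs x"
proof -
  obtain L0 where "L0-lipschitz_on UNIV (\<lambda>p. F0 (fst p) (snd p))"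
    using assms(3) unfolding lip_C1_def by blast
  moreover obtain L1 where "L1-lipschitz_on UNIV (\<lambda>p. F1 (fst p) (snd p))"
    using assms(4) unfolding lip_C1_def by blast
  moreover obtain C where C: "\<And>k. AE t in lebesgue_on {0..T}. norm (us k t) \<le> C"
    using assms(7) by blast
  have "AE t in lebesgue_on {0..T}. norm (us k t) \<le> max C 0" for k
    using C[of k] by (rule eventually_mono) simp
  ultimately have "lie_limit T \<tau> F0 F1 \<phi> us u xs x L0 L1 (max C 0)"
    using assms by unfold_locales auto
  then show ?thesis by (rule lie_limit.xs_weak_W11)
qed

end
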